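(* Let $A$ be a normed vector space, give $A^\vee$ the dual norm, let $X$ be a topological space, let $\kappa\colon X\to\mathrm{Max}\,A$ be a map and let $\kappa^\vee=F\circ\kappa\colon X\to\mathrm{Max}\,A^\vee$. (1) If $(X,A,\kappa)$ and $(X,A^\vee,\kappa^\vee)$ are both quotient vector bundles, then they are both continuous normed quotient vector bundles. (2) If $A$ is locally uniformly convex and $(X,A^\vee,\kappa^\vee)$ is a continuous normed quotient vector bundle, then $(X,A,\kappa)$ is a continuous normed quotient vector bundle. (3) If $A$ is reflexive and Fréchet smooth and $(X,A,\kappa)$ is a continuous normed quotient vector bundle, then $(X,A^\vee,\kappa^\vee)$ is a continuous normed quotient vector bundle.
   Context: Scalars are $\mathbb C$. $\mathrm{Max}\,A$ is the set of closed subspaces of $A$; $A^\vee$ is the space of continuous linear functionals with the dual norm; $F(V)=\{\phi\in A^\vee:\phi|_V=0\}$. The lower Vietoris topology on the set of subspaces of a normed space $B$ is generated by $\{V:V\cap U\ne\emptyset\}$, $U\subset B$ open. A quotient vector bundle is a triple $(X,B,\kappa)$ with $\kappa$ continuous from $X$ into the subspaces of $B$ with the lower Vietoris topology; its associated linear bundle $E$ is the quotient of $B\times X$ by $(a,x)\sim(b,x)\iff a-b\in\kappa(x)$, with quotient map $q$. When $B$ is normed, $(X,B,\kappa)$ is a continuous normed quotient vector bundle if it is a quotient vector bundle and the function $E\to\mathbb R$, $q(a,x)\mapsto\mathrm{dist}(a,\kappa(x))$, is continuous. $A$ is locally uniformly convex if for all $a\in A$ and sequences $(a_n)$, $\lim(2\|a\|^2+2\|a_n\|^2-\|a+a_n\|^2)=0$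 implies $\lim\|a-a_n\|=0$. $A$ is Fréchet smooth if for every $a$ with $\|a\|=1$ the limit $\lim_{\delta\to0}(\|a-\delta b\|-\|a\|)/\delta$ exists uniformly in $b$ with $\|b\|=1$. *)

theory Defs
  imports "HOL-Analysis.Analysis"
begin

text \<open>HOL provides only real normed vector spaces; a complex normed space is a real
normed space with a compatible complex scalar multiplication.\<close>

class cnormed_vector = real_normed_vector +
  fixes scaleC :: "complex \<Rightarrow> 'a \<Rightarrow> 'a"
  assumes scaleC_scaleR: "scaleC (complex_of_real r) x = scaleR r x"
    and scaleC_add_right: "scaleC a (x + y) = scaleC a x + scaleC a y"
    and scaleC_add_left: "scaleC (a + b) x = scaleC a x + scaleC b x"
    and scaleC_scaleC: "scaleC a (scaleC b x) = scaleC (a * b) x"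
    and norm_scaleC: "norm (scaleC a x) = cmod a * norm x"

text \<open>The dual A^v: continuous complex-linear functionals, realised inside the type of
bounded (real-)linear maps into complex, whose norm is the operator (= dual) norm.\<close>

definition cdual :: "('a::cnormed_vector \<Rightarrow>\<^sub>L complex) set" where
  "cdual = {f. \<forall>c x. blinfun_apply f (scaleC c x) = c * blinfun_apply f x}"

definition cscale :: "complex \<Rightarrow> ('a::real_normed_vector \<Rightarrow>\<^sub>L complex) \<Rightarrow> ('a \<Rightarrow>\<^sub>L complex)" where
  "cscale c f = Blinfun (\<lambda>x. c * blinfun_apply f x)"

text \<open>F(V) = annihilator of V in A^v.\<close>
definition annih :: "'a::cnormed_vector set \<Rightarrow> ('a \<Rightarrow>\<^sub>L complex) set" where
  "annih V = {\<phi> \<in> cdual. \<forall>v\<in>V. blinfun_apply \<phi> v = 0}"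

text \<open>A normed space B is given as a carrier set inside a real normed type together
with its complex scalar multiplication sc.\<close>

definition csubspace_in :: "(complex \<Rightarrow> 'b \<Rightarrow> 'b) \<Rightarrow> 'b::real_normed_vector set \<Rightarrow> 'b set \<Rightarrow> bool" where
  "csubspace_in sc B V \<longleftrightarrow> V \<subseteq> B \<and> 0 \<in> V \<and> (\<forall>x\<in>V. \<forall>y\<in>V. x + y \<in> V)
      \<and> (\<forall>c. \<forall>x\<in>V. sc c x \<in> V)"

definition lower_vietoris :: "(complex \<Rightarrow> 'b \<Rightarrow> 'b) \<Rightarrow> 'b::real_normed_vector set \<Rightarrow> 'b set topology" where
  "lower_vietoris sc B = topology_generated_by
     {{V. csubspace_in sc B V \<and> V \<inter> U \<noteq> {}} | U. openin (top_of_set B) U}"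

definition quotient_vector_bundle ::
  "'x topology \<Rightarrow> (complex \<Rightarrow> 'b \<Rightarrow> 'b) \<Rightarrow> 'b::real_normed_vector set \<Rightarrow> ('x \<Rightarrow> 'b set) \<Rightarrow> bool" where
  "quotient_vector_bundle X sc B \<kappa> \<longleftrightarrow>
     (\<forall>x\<in>topspace X. csubspace_in sc B (\<kappa> x)) \<and> continuous_map X (lower_vietoris sc B) \<kappa>"

text \<open>E carries the quotient topology of B \<times> X, so continuity of a function on E is
continuity of its composite with the quotient map q on B \<times> X.\<close>
definition cont_normed_qvb ::
  "'x topology \<Rightarrow> (complex \<Rightarrow> 'b \<Rightarrow> 'b) \<Rightarrow> 'b::real_normed_vector set \<Rightarrow> ('x \<Rightarrow> 'b set) \<Rightarrow> bool" where
  "cont_normed_qvb X sc B \<kappa> \<longleftrightarrow> quotient_vector_bundle X sc B \<kappa> \<and>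
     continuous_map (prod_topology (top_of_set B) X) euclideanreal (\<lambda>(a, x). infdist a (\<kappa> x))"

definition locally_uniformly_convex :: "'a::real_normed_vector itself \<Rightarrow> bool" where
  "locally_uniformly_convex _ \<longleftrightarrow> (\<forall>(a::'a) (s::nat \<Rightarrow> 'a).
     (\<lambda>n. 2 * (norm a)\<^sup>2 + 2 * (norm (s n))\<^sup>2 - (norm (a + s n))\<^sup>2) \<longlonglongrightarrow> 0
     \<longrightarrow> (\<lambda>n. norm (a - s n)) \<longlonglongrightarrow> 0)"

definition frechet_smooth :: "'a::real_normed_vector itself \<Rightarrow> bool" where
  "frechet_smooth _ \<longleftrightarrow> (\<forall>a::'a. norm a = 1 \<longrightarrow> (\<exists>L :: 'a \<Rightarrow> real. \<forall>\<epsilon>>0. \<exists>\<eta>>0.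
     \<forall>\<delta>::real. \<forall>b::'a. \<delta> \<noteq> 0 \<and> \<bar>\<delta>\<bar> < \<eta> \<and> norm b = 1 \<longrightarrow>
       \<bar>(norm (a - \<delta> *\<^sub>R b) - norm a) / \<delta> - L b\<bar> < \<epsilon>))"

definition reflexive_space :: "'a::cnormed_vector itself \<Rightarrow> bool" where
  "reflexive_space _ \<longleftrightarrow> (\<forall>\<Phi> :: ('a \<Rightarrow>\<^sub>L complex) \<Rightarrow> complex.
     (\<forall>f\<in>cdual. \<forall>g\<in>cdual. \<Phi> (f + g) = \<Phi> f + \<Phi> g) \<and>
     (\<forall>c. \<forall>f\<in>cdual. \<Phi> (cscale c f) = c * \<Phi> f) \<and>
     (\<exists>K. \<forall>f\<in>cdual. norm (\<Phi> f) \<le> K * norm f)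
     \<longrightarrow> (\<exists>a::'a. \<forall>f\<in>cdual. \<Phi> f = blinfun_apply f a))"

end

theory Submission
  imports Defs
begin

text \<open>By Hahn--Banach, the distance from a to a subspace V is the maximum of the moduli of
  phi a over the unit functionals phi annihilating V, and the distance from a functional phi to
  the annihilator of V is the norm of the restriction of phi to V. Hence lower semicontinuity of
  either fibration (the lower Vietoris condition) gives lower semicontinuity of the distance
  function of the other one, while each distance function is upper semicontinuous as soon as
  its own fibration is lower semicontinuous; this is (1). For (2) and (3), lower semicontinuity
  of the missing fibration is recovered from continuity of the given distance function: almost
  norming vectors, resp. functionals, found on nearby fibres are close to the prescribed one, by
  local uniform convexity, resp. by Smulian's lemma for the Frechet smooth space, where
  reflexivity provides a vector at which the prescribed functional attains its norm.\<close>

section \<open>Hahn--Banach\<close>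

definition sublinear :: "('b::real_vector \<Rightarrow> real) \<Rightarrow> bool" where
  "sublinear p \<longleftrightarrow> (\<forall>x y. p (x + y) \<le> p x + p y) \<and> (\<forall>r x. 0 \<le> r \<longrightarrow> p (r *\<^sub>R x) = r * p x)"

lemma sublinear_scaled_norm: "0 \<le> C \<Longrightarrow> sublinear (\<lambda>x::'b::real_normed_vector. C * norm x)"
  unfolding sublinear_def
  by (simp add: distrib_left[symmetric] mult_left_mono norm_triangle_ineq)

definition dominated_extension_graph ::
  "('b::real_vector \<Rightarrow> real) \<Rightarrow> 'b set \<Rightarrow> 'b set \<Rightarrow> ('b \<Rightarrow> real) \<Rightarrow> ('b \<times> real) set \<Rightarrow> bool" where
  "dominated_extension_graph p S M u G \<longleftrightarrow>
     subspace G \<and> G \<subseteq> S \<times> UNIV \<and> (\<forall>m\<in>M. (m, u m) \<in> G) \<and> (\<forall>(x, a)\<in>G. a \<le> p x)"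

lemma dominated_extension_graph_unique:
  assumes G: "dominated_extension_graph p S M u G" and p: "sublinear p"
    and "(x, a) \<in> G" "(x, b) \<in> G"
  shows "a = b"
proof -
  have sG: "subspace G" and dom: "\<And>x a. (x, a) \<in> G \<Longrightarrow> a \<le> p x"
    using G unfolding dominated_extension_graph_def by auto
  have "p (0 *\<^sub>R 0) = 0 * p 0" using p unfolding sublinear_def by blast
  then have "p 0 = 0" by simp
  moreover have "(x, a) - (x, b) \<in> G" "(x, b) - (x, a) \<in> G"
    using subspace_diff[OF sG] assms(3,4) by blast+
  then have "(0, a - b) \<in> G" "(0, b - a) \<in> G" by simp_all
  ultimately show ?thesis using dom[of 0 "a - b"] dom[of 0 "b - a"] by simp
qed

lemma dominated_extension_graph_squeeze:
  assumes G: "dominated_extension_graph p S M u G" and p: "sublinear p"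
  shows "\<exists>c. (\<forall>(m, a)\<in>G. a - p (m - x0) \<le> c) \<and> (\<forall>(n, b)\<in>G. c \<le> p (n + x0) - b)"
proof -
  have sG: "subspace G" and dom: "\<And>x a. (x, a) \<in> G \<Longrightarrow> a \<le> p x"
    using G unfolding dominated_extension_graph_def by auto
  have key: "a - p (m - x0) \<le> p (n + x0) - b" if "(m, a) \<in> G" "(n, b) \<in> G" for m a n b
  proof -
    have "(m + n, a + b) \<in> G" using subspace_add[OF sG that] by simp
    then have "a + b \<le> p ((m - x0) + (n + x0))" using dom by simp
    then show ?thesis using p unfolding sublinear_def by (smt (verit))
  qed
  define L where "L = {a - p (m - x0) | m a. (m, a) \<in> G}"
  have G0: "(0, 0) \<in> G" using subspace_0[OF sG] by (simp add: zero_prod_def)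
  have "bdd_above L" unfolding L_def bdd_above_def using key[OF _ G0] by auto
  then have "\<forall>(m, a)\<in>G. a - p (m - x0) \<le> Sup L" by (auto intro: cSup_upper simp: L_def)
  moreover have "\<forall>(n, b)\<in>G. Sup L \<le> p (n + x0) - b"
    using G0 key by (auto intro!: cSup_least simp: L_def)
  ultimately show ?thesis by blast
qed

lemma dominated_extension_graph_shift_le:
  assumes G: "dominated_extension_graph p S M u G" and p: "sublinear p" and ma: "(m, a) \<in> G"
    and c_lower: "\<forall>(m, a)\<in>G. a - p (m - x0) \<le> c" and c_upper: "\<forall>(n, b)\<in>G. c \<le> p (n + x0) - b"
  shows "a + t * c \<le> p (m + t *\<^sub>R x0)"
proof -
  have sG: "subspace G" and dom: "\<And>x a. (x, a) \<in> G \<Longrightarrow> a \<le> p x"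
    using G unfolding dominated_extension_graph_def by auto
  have p_scale: "0 \<le> r \<Longrightarrow> p (r *\<^sub>R x) = r * p x" for r x
    using p unfolding sublinear_def by auto
  show ?thesis
  proof (cases t "0::real" rule: linorder_cases)
    case less
    define s where "s = 1 / - t"
    have s: "0 < s" "s * t = -1" using less by (simp_all add: s_def)
    have "(s *\<^sub>R m, s * a) \<in> G" using subspace_scale[OF sG ma, of s] by simp
    with c_lower have "s * a - c \<le> p (s *\<^sub>R m - x0)" by auto
    also have "s *\<^sub>R m - x0 = s *\<^sub>R (m + t *\<^sub>R x0)" using s(2) by (simp add: algebra_simps)
    finally have "s * a - c \<le> s * p (m + t *\<^sub>R x0)" using s(1) p_scale by simp
    then have "t * p (m + t *\<^sub>R x0) \<le> t * (a + t * c)" using less by (simp add: s_def field_simps)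
    then show ?thesis using less by (simp add: mult_le_cancel_left)
  next
    case greater
    define s where "s = 1 / t"
    have s: "0 < s" "s * t = 1" using greater by (simp_all add: s_def)
    have "(s *\<^sub>R m, s * a) \<in> G" using subspace_scale[OF sG ma, of s] by simp
    with c_upper have "c \<le> p (s *\<^sub>R m + x0) - s * a" by auto
    also have "s *\<^sub>R m + x0 = s *\<^sub>R (m + t *\<^sub>R x0)" using s(2) by (simp add: algebra_simps)
    finally have "s * a + c \<le> s * p (m + t *\<^sub>R x0)" using s(1) p_scale by simp
    then have "t * (a + t * c) \<le> t * p (m + t *\<^sub>R x0)" using greater by (simp add: s_def field_simps)
    then show ?thesis using greater by (simp add: mult_le_cancel_left)
  qed (use dom ma in simp)
qed

lemma dominated_extension_graph_extend:
  assumes G: "dominated_extension_graph p S M u G" and p: "sublinear p"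
    and S: "subspace S" and x0: "x0 \<in> S" "x0 \<notin> fst ` G"
  shows "\<exists>G'. dominated_extension_graph p S M u G' \<and> G \<subset> G'"
proof -
  have sG: "subspace G" and GS: "G \<subseteq> S \<times> UNIV" and ext: "\<And>m. m \<in> M \<Longrightarrow> (m, u m) \<in> G"
    using G unfolding dominated_extension_graph_def by auto
  obtain c where c: "\<forall>(m, a)\<in>G. a - p (m - x0) \<le> c" "\<forall>(n, b)\<in>G. c \<le> p (n + x0) - b"
    using dominated_extension_graph_squeeze[OF G p] by blast
  define e where "e = (x0, c)"
  define G' where "G' = {q + t *\<^sub>R e | q t. q \<in> G}"
  have G'_sums: "G' = {q + v | q v. q \<in> G \<and> v \<in> span {e}}"
    unfolding G'_def span_singleton by blast
  have "subspace G'" unfolding G'_sums by (rule subspace_sums[OF sG subspace_span])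
  moreover have "\<forall>(x, a)\<in>G'. a \<le> p x"
    unfolding G'_def e_def using dominated_extension_graph_shift_le[OF G p _ c] by auto
  moreover have "G' \<subseteq> S \<times> UNIV"
    unfolding G'_def e_def using GS x0(1) S by (auto simp: subspace_add subspace_scale)
  moreover have "G \<subseteq> G'"
  proof
    fix q assume "q \<in> G"
    moreover have "q = q + 0 *\<^sub>R e" by simp
    ultimately show "q \<in> G'" unfolding G'_def by blast
  qed
  moreover have "e \<in> G' - G"
  proof
    have "e = 0 + 1 *\<^sub>R e" by simp
    with subspace_0[OF sG] show "e \<in> G'" unfolding G'_def by blast
    show "e \<notin> G" using x0(2) unfolding e_def by force
  qed
  ultimately show ?thesis using ext unfolding dominated_extension_graph_def by blast
qed

lemma subspace_graph:
  assumes M: "subspace M" and u: "\<And>x y. x \<in> M \<Longrightarrow> y \<in> M \<Longrightarrow> u (x + y) = u x + u y"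
    "\<And>r x. x \<in> M \<Longrightarrow> u (r *\<^sub>R x) = r * u x"
  shows "subspace ((\<lambda>m. (m, u m)) ` M)"
  unfolding subspace_def
proof (intro conjI ballI allI)
  have "u 0 = 0" using u(2)[OF subspace_0[OF M], of 0] by simp
  then show "0 \<in> (\<lambda>m. (m, u m)) ` M" using subspace_0[OF M] by (force simp: zero_prod_def)
next
  fix q q' assume "q \<in> (\<lambda>m. (m, u m)) ` M" "q' \<in> (\<lambda>m. (m, u m)) ` M"
  then obtain m m' where "m \<in> M" "m' \<in> M" "q = (m, u m)" "q' = (m', u m')" by blast
  then show "q + q' \<in> (\<lambda>m. (m, u m)) ` M"
    using u(1) subspace_add[OF M] by (auto intro!: image_eqI[of _ _ "m + m'"])
next
  fix r q assume "q \<in> (\<lambda>m. (m, u m)) ` M"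
  then obtain m where "m \<in> M" "q = (m, u m)" by blast
  then show "r *\<^sub>R q \<in> (\<lambda>m. (m, u m)) ` M"
    using u(2) subspace_scale[OF M] by (auto intro!: image_eqI[of _ _ "r *\<^sub>R m"])
qed

lemma subspace_Union_chain:
  assumes "\<C> \<noteq> {}" and sub: "\<And>G. G \<in> \<C> \<Longrightarrow> subspace G"
    and cmp: "\<And>G G'. G \<in> \<C> \<Longrightarrow> G' \<in> \<C> \<Longrightarrow> G \<subseteq> G' \<or> G' \<subseteq> G"
  shows "subspace (\<Union>\<C>)"
  unfolding subspace_def
proof (intro conjI ballI allI)
  show "0 \<in> \<Union>\<C>" using assms(1) sub subspace_0 by blast
next
  fix q q' assume "q \<in> \<Union>\<C>" "q' \<in> \<Union>\<C>"
  then obtain G G' where G: "G \<in> \<C>" "G' \<in> \<C>" "q \<in> G" "q' \<in> G'" by blast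
  with cmp[OF G(1,2)] show "q + q' \<in> \<Union>\<C>"
    using subspace_add[OF sub[OF G(1)]] subspace_add[OF sub[OF G(2)]] by blast
next
  fix r q assume "q \<in> \<Union>\<C>"
  then show "r *\<^sub>R q \<in> \<Union>\<C>" using sub subspace_scale by blast
qed

theorem real_hahn_banach:
  assumes p: "sublinear p" and S: "subspace S" and M: "subspace M" "M \<subseteq> S"
    and u: "\<And>x y. x \<in> M \<Longrightarrow> y \<in> M \<Longrightarrow> u (x + y) = u x + u y"
      "\<And>r x. x \<in> M \<Longrightarrow> u (r *\<^sub>R x) = r * u x"
      "\<And>x. x \<in> M \<Longrightarrow> u x \<le> p x"
  shows "\<exists>U. (\<forall>x\<in>S. \<forall>y\<in>S. U (x + y) = U x + U y) \<and> (\<forall>r. \<forall>x\<in>S. U (r *\<^sub>R x) = r * U x)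
     \<and> (\<forall>x\<in>M. U x = u x) \<and> (\<forall>x\<in>S. U x \<le> p x)"
proof -
  define \<G> where "\<G> = {G. dominated_extension_graph p S M u G}"
  have "(\<lambda>m. (m, u m)) ` M \<in> \<G>"
    using subspace_graph[OF M(1) u(1,2)] M(2) u(3)
    unfolding \<G>_def dominated_extension_graph_def by auto
  moreover have "\<Union>\<C> \<in> \<G>" if "\<C> \<noteq> {}" and ch: "subset.chain \<G> \<C>" for \<C>
  proof -
    have "subspace G" if "G \<in> \<C>" for G
      using ch that unfolding \<G>_def dominated_extension_graph_def subset.chain_def by blast
    moreover have "G \<subseteq> G' \<or> G' \<subseteq> G" if "G \<in> \<C>" "G' \<in> \<C>" for G G'
      using ch that unfolding subset.chain_def by blast
    ultimately have "subspace (\<Union>\<C>)" by (rule subspace_Union_chain[OF that(1)])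
    with that show ?thesis
      unfolding \<G>_def dominated_extension_graph_def subset.chain_def by blast
  qed
  ultimately obtain G where "G \<in> \<G>" and max: "\<forall>G'\<in>\<G>. G \<subseteq> G' \<longrightarrow> G' = G"
    using subset_Zorn_nonempty[of \<G>] by blast
  then have G: "dominated_extension_graph p S M u G" unfolding \<G>_def by simp
  then have sG: "subspace G" and GS: "G \<subseteq> S \<times> UNIV" and ext: "\<And>m. m \<in> M \<Longrightarrow> (m, u m) \<in> G"
    and dom: "\<And>x a. (x, a) \<in> G \<Longrightarrow> a \<le> p x"
    unfolding dominated_extension_graph_def by auto
  have "\<forall>x\<in>S. \<exists>a. (x, a) \<in> G"
  proof (rule ccontr)
    assume "\<not> ?thesis"
    then obtain x0 where "x0 \<in> S" "x0 \<notin> fst ` G" by force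
    with dominated_extension_graph_extend[OF G p S] max show False unfolding \<G>_def by blast
  qed
  then obtain U where UG: "\<And>x. x \<in> S \<Longrightarrow> (x, U x) \<in> G" by metis
  have U_eq: "U x = a" if "(x, a) \<in> G" for x a
    using dominated_extension_graph_unique[OF G p UG that] GS that by blast
  show ?thesis
  proof (intro exI[of _ U] conjI ballI allI)
    fix x y assume "x \<in> S" "y \<in> S"
    then show "U (x + y) = U x + U y" using subspace_add[OF sG UG UG] U_eq by simp
  next
    fix r x assume "x \<in> S"
    then show "U (r *\<^sub>R x) = r * U x" using subspace_scale[OF sG UG] U_eq by simp
  qed (use U_eq ext UG dom in auto)
qed

lemma exists_unimodular_mult_eq_cmod: "\<exists>u. cmod u = 1 \<and> u * z = complex_of_real (cmod z)"
proof (cases "z = 0")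
  case False
  have "cnj z / cmod z * z = (z * cnj z) / cmod z" by simp
  also have "\<dots> = cmod z" using False by (simp flip: complex_norm_square add: power2_eq_square)
  finally show ?thesis using False by (intro exI[of _ "cnj z / cmod z"]) (simp add: norm_divide)
qed (auto intro: exI[of _ 1])

definition clinear_on :: "(complex \<Rightarrow> 'b \<Rightarrow> 'b) \<Rightarrow> 'b::plus set \<Rightarrow> ('b \<Rightarrow> complex) \<Rightarrow> bool" where
  "clinear_on sc S G \<longleftrightarrow>
     (\<forall>x\<in>S. \<forall>y\<in>S. G (x + y) = G x + G y) \<and> (\<forall>c. \<forall>x\<in>S. G (sc c x) = c * G x)"

text \<open>A complex normed space carried by a real subspace S of a real normed type. Both A and
  its dual are instances; the dual is only a subset of the type of bounded real-linear maps.\<close>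

locale complex_structure =
  fixes S :: "'b::real_normed_vector set" and sc :: "complex \<Rightarrow> 'b \<Rightarrow> 'b"
  assumes subspace: "subspace S"
    and sc_closed: "\<And>c x. x \<in> S \<Longrightarrow> sc c x \<in> S"
    and sc_of_real: "\<And>r x. x \<in> S \<Longrightarrow> sc (complex_of_real r) x = r *\<^sub>R x"
    and sc_add_left: "\<And>a b x. x \<in> S \<Longrightarrow> sc (a + b) x = sc a x + sc b x"
    and sc_add_right: "\<And>c x y. x \<in> S \<Longrightarrow> y \<in> S \<Longrightarrow> sc c (x + y) = sc c x + sc c y"
    and sc_sc: "\<And>a b x. x \<in> S \<Longrightarrow> sc a (sc b x) = sc (a * b) x"
    and norm_sc: "\<And>c x. x \<in> S \<Longrightarrow> norm (sc c x) = cmod c * norm x"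
begin

lemma sc_zero: "x \<in> S \<Longrightarrow> sc 0 x = 0"
  using sc_of_real[of x 0] by simp

lemma sc_one: "x \<in> S \<Longrightarrow> sc 1 x = x"
  using sc_of_real[of x 1] by simp

lemma sc_eq_Re_Im:
  assumes "x \<in> S"
  shows "sc c x = Re c *\<^sub>R x + Im c *\<^sub>R sc \<i> x"
proof -
  have "c = of_real (Re c) + of_real (Im c) * \<i>" by (simp add: complex_eq_iff)
  then have "sc c x = sc (of_real (Re c)) x + sc (of_real (Im c) * \<i>) x"
    using sc_add_left[OF assms] by metis
  also have "sc (of_real (Im c) * \<i>) x = sc (of_real (Im c)) (sc \<i> x)"
    using sc_sc[OF assms] by simp
  finally show ?thesis using sc_of_real sc_closed assms by simp
qed

lemma csubspace_in_subspace: "csubspace_in sc S M \<Longrightarrow> subspace M"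
  unfolding csubspace_in_def subspace_def by (metis sc_of_real subsetD)

lemma clinear_on_complexification:
  assumes U_add: "\<And>x y. x \<in> S \<Longrightarrow> y \<in> S \<Longrightarrow> U (x + y) = U x + U y"
    and U_scale: "\<And>r x. x \<in> S \<Longrightarrow> U (r *\<^sub>R x) = r * U x"
  shows "clinear_on sc S (\<lambda>x. Complex (U x) (- U (sc \<i> x)))"
  unfolding clinear_on_def
proof (intro conjI ballI allI)
  fix x y assume "x \<in> S" "y \<in> S"
  then show "Complex (U (x + y)) (- U (sc \<i> (x + y)))
      = Complex (U x) (- U (sc \<i> x)) + Complex (U y) (- U (sc \<i> y))"
    using sc_add_right U_add sc_closed by (simp add: complex_eq_iff)
next
  fix c x assume x: "x \<in> S"
  have ix: "sc \<i> x \<in> S" using sc_closed x by blast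
  have "sc \<i> (sc c x) = sc (\<i> * c) x" using sc_sc x by blast
  also have "\<dots> = Re (\<i> * c) *\<^sub>R x + Im (\<i> * c) *\<^sub>R sc \<i> x" by (rule sc_eq_Re_Im[OF x])
  also have "\<dots> = (- Im c) *\<^sub>R x + Re c *\<^sub>R sc \<i> x" by simp
  finally have "U (sc \<i> (sc c x)) = - Im c * U x + Re c * U (sc \<i> x)"
    using U_add U_scale x ix subspace_scale[OF subspace] by (simp del: scaleR_minus_left)
  moreover have "U (sc c x) = Re c * U x + Im c * U (sc \<i> x)"
    unfolding sc_eq_Re_Im[OF x, of c] using U_add U_scale x ix subspace_scale[OF subspace] by simp
  ultimately show "Complex (U (sc c x)) (- U (sc \<i> (sc c x))) = c * Complex (U x) (- U (sc \<i> x))"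
    by (simp add: complex_eq_iff algebra_simps)
qed

lemma cmod_le_of_Re_le:
  assumes G: "clinear_on sc S G" and G_le: "\<And>x. x \<in> S \<Longrightarrow> Re (G x) \<le> C * norm x" and x: "x \<in> S"
  shows "cmod (G x) \<le> C * norm x"
proof -
  obtain w where w: "cmod w = 1" "w * G x = cmod (G x)" using exists_unimodular_mult_eq_cmod by blast
  then have "cmod (G x) = Re (G (sc w x))" using G x unfolding clinear_on_def by simp
  also have "\<dots> \<le> C * norm x" using G_le[OF sc_closed[OF x], of w] norm_sc[OF x, of w] w(1) by simp
  finally show ?thesis .
qed

theorem hahn_banach:
  assumes M: "csubspace_in sc S M" and g: "clinear_on sc M g"
    and g_le: "\<And>x. x \<in> M \<Longrightarrow> cmod (g x) \<le> C * norm x" and C: "0 \<le> C"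
  shows "\<exists>G. clinear_on sc S G \<and> (\<forall>x\<in>M. G x = g x) \<and> (\<forall>x\<in>S. cmod (G x) \<le> C * norm x)"
proof -
  have MS: "M \<subseteq> S" and M_sc: "\<And>c x. x \<in> M \<Longrightarrow> sc c x \<in> M"
    using M unfolding csubspace_in_def by auto
  have g_add: "\<And>x y. x \<in> M \<Longrightarrow> y \<in> M \<Longrightarrow> g (x + y) = g x + g y"
    and g_sc: "\<And>c x. x \<in> M \<Longrightarrow> g (sc c x) = c * g x"
    using g unfolding clinear_on_def by auto
  have Re_add: "Re (g (x + y)) = Re (g x) + Re (g y)" if "x \<in> M" "y \<in> M" for x y
    using g_add[OF that] by simp
  have Re_scale: "Re (g (r *\<^sub>R x)) = r * Re (g x)" if "x \<in> M" for r x
    using g_sc[OF that, of "of_real r"] sc_of_real[of x r] that MS by auto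
  have Re_le: "Re (g x) \<le> C * norm x" if "x \<in> M" for x
    using g_le[OF that] complex_Re_le_cmod[of "g x"] by linarith
  obtain U where U_add: "\<And>x y. x \<in> S \<Longrightarrow> y \<in> S \<Longrightarrow> U (x + y) = U x + U y"
    and U_scale: "\<And>r x. x \<in> S \<Longrightarrow> U (r *\<^sub>R x) = r * U x"
    and U_M: "\<And>x. x \<in> M \<Longrightarrow> U x = Re (g x)" and U_le: "\<And>x. x \<in> S \<Longrightarrow> U x \<le> C * norm x"
    using real_hahn_banach[OF sublinear_scaled_norm[OF C] subspace csubspace_in_subspace[OF M] MS
        Re_add Re_scale Re_le] by blast
  define G where "G x = Complex (U x) (- U (sc \<i> x))" for x
  have G: "clinear_on sc S G" unfolding G_def by (rule clinear_on_complexification[OF U_add U_scale])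
  moreover have "G x = g x" if "x \<in> M" for x
    using U_M[OF that] U_M[OF M_sc[OF that]] g_sc[OF that] unfolding G_def by (simp add: complex_eq_iff)
  moreover have "cmod (G x) \<le> C * norm x" if "x \<in> S" for x
    by (rule cmod_le_of_Re_le[OF G _ that]) (simp add: G_def U_le)
  ultimately show ?thesis by blast
qed

lemma add_span_coeff_unique:
  assumes V: "csubspace_in sc S V" and a: "a \<in> S" "a \<notin> V"
    and "v \<in> V" "v' \<in> V" "v + sc s a = v' + sc s' a"
  shows "s = s'"
proof (rule ccontr)
  assume ne: "s \<noteq> s'"
  have "sc s a = sc s' a + sc (s - s') a" using sc_add_left[OF a(1), of s' "s - s'"] by simp
  then have "sc (s - s') a = v' - v" using assms(6) by (simp add: algebra_simps)
  moreover have "a = sc (1 / (s - s')) (sc (s - s') a)" using sc_sc[OF a(1)] ne sc_one[OF a(1)] by simp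
  moreover have "v' - v \<in> V" using subspace_diff[OF csubspace_in_subspace[OF V]] assms(4,5) by blast
  ultimately show False using a(2) V unfolding csubspace_in_def by metis
qed

lemma cmod_mult_infdist_le_norm_add_span:
  assumes V: "csubspace_in sc S V" and a: "a \<in> S" and v: "v \<in> V"
  shows "cmod s * infdist a V \<le> norm (v + sc s a)"
proof (cases "s = 0")
  case False
  have VS: "V \<subseteq> S" and sV: "subspace V" and V_sc: "\<And>c x. x \<in> V \<Longrightarrow> sc c x \<in> V"
    using V csubspace_in_subspace[OF V] unfolding csubspace_in_def by auto
  define w where "w = - sc (1 / s) v"
  have w: "w \<in> V" "w \<in> S" unfolding w_def using V_sc[OF v] subspace_neg[OF sV] VS by auto
  have "sc s (a - w) = sc s a + sc s (sc (1 / s) v)"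
    unfolding w_def using sc_add_right[OF a sc_closed] VS v by auto
  also have "sc s (sc (1 / s) v) = v" using sc_sc VS v False sc_one by auto
  finally have "v + sc s a = sc s (a - w)" by simp
  then have "norm (v + sc s a) = cmod s * dist a w"
    using norm_sc a w(2) subspace_diff[OF subspace] by (simp add: dist_norm)
  then show ?thesis using infdist_le[OF w(1), of a] by (simp add: mult_left_mono)
qed simp

lemma add_span_add: "a \<in> S \<Longrightarrow> (v + sc s a) + (v' + sc s' a) = (v + v') + sc (s + s') a"
  using sc_add_left by (simp add: algebra_simps)

lemma add_span_sc: "a \<in> S \<Longrightarrow> v \<in> S \<Longrightarrow> sc c (v + sc s a) = sc c v + sc (c * s) a"
  using sc_add_right sc_closed sc_sc by auto

lemma csubspace_in_add_span:
  assumes V: "csubspace_in sc S V" and a: "a \<in> S"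
  shows "csubspace_in sc S {v + sc s a | v s. v \<in> V}"
proof -
  have VS: "V \<subseteq> S" and V0: "0 \<in> V" and V_add: "\<And>x y. x \<in> V \<Longrightarrow> y \<in> V \<Longrightarrow> x + y \<in> V"
    and V_sc: "\<And>c x. x \<in> V \<Longrightarrow> sc c x \<in> V"
    using V unfolding csubspace_in_def by auto
  show ?thesis
    unfolding csubspace_in_def
  proof (intro conjI ballI allI subsetI)
    fix x assume "x \<in> {v + sc s a | v s. v \<in> V}"
    then obtain v s where "v \<in> V" "x = v + sc s a" by blast
    then show "x \<in> S" using VS sc_closed[OF a] subspace_add[OF subspace] by auto
  next
    have "0 = 0 + sc 0 a" using sc_zero[OF a] by simp
    then show "0 \<in> {v + sc s a | v s. v \<in> V}" using V0 by blast
  next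
    fix x y assume "x \<in> {v + sc s a | v s. v \<in> V}" "y \<in> {v + sc s a | v s. v \<in> V}"
    then obtain v s v' s' where "v \<in> V" "v' \<in> V" "x = v + sc s a" "y = v' + sc s' a" by blast
    then show "x + y \<in> {v + sc s a | v s. v \<in> V}" using add_span_add[OF a] V_add by blast
  next
    fix c x assume "x \<in> {v + sc s a | v s. v \<in> V}"
    then obtain v s where "v \<in> V" "x = v + sc s a" by blast
    then show "sc c x \<in> {v + sc s a | v s. v \<in> V}" using add_span_sc[OF a] VS V_sc by blast
  qed
qed

lemma exists_coefficient_functional:
  assumes V: "csubspace_in sc S V" and a: "a \<in> S" "a \<notin> V"
  shows "\<exists>g. clinear_on sc {v + sc s a | v s. v \<in> V} g \<and> (\<forall>v\<in>V. \<forall>s. g (v + sc s a) = s)"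
proof -
  have VS: "V \<subseteq> S" and V_add: "\<And>x y. x \<in> V \<Longrightarrow> y \<in> V \<Longrightarrow> x + y \<in> V"
    and V_sc: "\<And>c x. x \<in> V \<Longrightarrow> sc c x \<in> V"
    using V unfolding csubspace_in_def by auto
  define g where "g m = (THE s. \<exists>v\<in>V. m = v + sc s a)" for m
  have g_eq: "g (v + sc s a) = s" if "v \<in> V" for v s
    unfolding g_def
    by (rule the_equality) (use that add_span_coeff_unique[OF V a] in blast)+
  have "clinear_on sc {v + sc s a | v s. v \<in> V} g"
    unfolding clinear_on_def
  proof (intro conjI ballI allI)
    fix x y assume "x \<in> {v + sc s a | v s. v \<in> V}" "y \<in> {v + sc s a | v s. v \<in> V}"
    then obtain v s v' s' where vs: "v \<in> V" "v' \<in> V" and xy: "x = v + sc s a" "y = v' + sc s' a"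
      by blast
    have "x + y = (v + v') + sc (s + s') a" unfolding xy by (rule add_span_add[OF a(1)])
    then show "g (x + y) = g x + g y" using g_eq V_add[OF vs] vs unfolding xy by presburger
  next
    fix c x assume "x \<in> {v + sc s a | v s. v \<in> V}"
    then obtain v s where "v \<in> V" "x = v + sc s a" by blast
    then show "g (sc c x) = c * g x" using add_span_sc[OF a(1)] VS V_sc g_eq by auto
  qed
  with g_eq show ?thesis by blast
qed

theorem annihilating_functional:
  assumes V: "csubspace_in sc S V" and a: "a \<in> S"
  shows "\<exists>G. clinear_on sc S G \<and> (\<forall>v\<in>V. G v = 0) \<and> (\<forall>x\<in>S. cmod (G x) \<le> norm x)
    \<and> G a = of_real (infdist a V)"
proof (cases "a \<in> V")
  case True
  then show ?thesis by (intro exI[of _ "\<lambda>_. 0"]) (simp add: clinear_on_def)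
next
  case False
  define M where "M = {v + sc s a | v s. v \<in> V}"
  obtain g where g: "clinear_on sc M g" and g_eq: "\<And>v s. v \<in> V \<Longrightarrow> g (v + sc s a) = s"
    using exists_coefficient_functional[OF V a False] unfolding M_def by blast
  have M: "csubspace_in sc S M" unfolding M_def by (rule csubspace_in_add_span[OF V a])
  define d where "d = infdist a V"
  have "clinear_on sc M (\<lambda>x. g x * d)" using g unfolding clinear_on_def by (simp add: distrib_right)
  moreover have "cmod (g x * d) \<le> 1 * norm x" if "x \<in> M" for x
    using that cmod_mult_infdist_le_norm_add_span[OF V a] g_eq infdist_nonneg[of a V]
    unfolding M_def d_def by (auto simp: norm_mult)
  ultimately obtain G where G: "clinear_on sc S G" "\<And>x. x \<in> M \<Longrightarrow> G x = g x * d"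
      "\<And>x. x \<in> S \<Longrightarrow> cmod (G x) \<le> 1 * norm x"
    using hahn_banach[OF M _ _ zero_le_one] by blast
  have "G v = 0" if "v \<in> V" for v
  proof -
    have "v = v + sc 0 a" using sc_zero[OF a] by simp
    then have "v \<in> M" "g v = 0" using that g_eq[OF that, of 0] unfolding M_def by (blast, simp)
    then show ?thesis using G(2) by simp
  qed
  moreover have "G a = d"
  proof -
    have V0: "0 \<in> V" using V unfolding csubspace_in_def by blast
    have "a = 0 + sc 1 a" using sc_one[OF a] by simp
    then have "a \<in> M" "g a = 1" using V0 g_eq[OF V0, of 1] unfolding M_def by (blast, simp)
    then show ?thesis using G(2) by simp
  qed
  ultimately show ?thesis using G(1,3) d_def by auto
qed

corollary norming_functional:
  assumes "a \<in> S"
  shows "\<exists>G. clinear_on sc S G \<and> (\<forall>x\<in>S. cmod (G x) \<le> norm x) \<and> G a = of_real (norm a)"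
proof -
  have "csubspace_in sc S {0}"
    unfolding csubspace_in_def using subspace_0[OF subspace] norm_sc[of 0] by auto
  moreover have "infdist a {0} = norm a" by (simp add: infdist_def dist_norm)
  ultimately show ?thesis using annihilating_functional[OF _ assms] by metis
qed

end

lemma cscale_apply [simp]: "blinfun_apply (cscale c f) x = c * blinfun_apply f x"
proof -
  have "bounded_linear (\<lambda>x. c * blinfun_apply f x)"
    by (rule bounded_linear_compose[OF bounded_linear_mult_right blinfun.bounded_linear_right])
  then show ?thesis unfolding cscale_def by (simp add: bounded_linear_Blinfun_apply)
qed

lemma cscale_cscale: "cscale a (cscale b f) = cscale (a * b) f"
  by (rule blinfun_eqI) (simp add: mult.assoc)

lemma norm_cscale: "norm (cscale c f) = cmod c * norm f"
proof (cases "c = 0")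
  case True
  then have "cscale c f = 0" by (intro blinfun_eqI) simp
  with True show ?thesis by simp
next
  case False
  have le: "norm (cscale c g) \<le> cmod c * norm g" for c g
    by (rule norm_blinfun_bound) (auto simp: norm_mult mult.assoc intro: mult_left_mono norm_blinfun)
  have "f = cscale (1 / c) (cscale c f)" using False by (intro blinfun_eqI) simp
  then have "norm f \<le> norm (cscale c f) / cmod c" using le[of "1 / c" "cscale c f"] by (simp add: norm_divide)
  with False le[of c f] show ?thesis by (simp add: field_simps)
qed

lemma cdual_zero: "0 \<in> cdual"
  unfolding cdual_def by simp

lemma cdual_add: "f \<in> cdual \<Longrightarrow> g \<in> cdual \<Longrightarrow> f + g \<in> cdual"
  unfolding cdual_def by (simp add: blinfun.add_left distrib_left)

lemma cdual_diff: "f \<in> cdual \<Longrightarrow> g \<in> cdual \<Longrightarrow> f - g \<in> cdual"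
  unfolding cdual_def by (simp add: blinfun.diff_left right_diff_distrib)

lemma cdual_scaleR: "f \<in> cdual \<Longrightarrow> r *\<^sub>R f \<in> cdual"
  unfolding cdual_def by (simp add: blinfun.scaleR_left scaleR_conv_of_real mult.left_commute)

lemma cdual_cscale: "f \<in> cdual \<Longrightarrow> cscale c f \<in> cdual"
  unfolding cdual_def by (simp add: mult.left_commute)

lemma complex_structure_UNIV: "complex_structure (UNIV :: 'a::cnormed_vector set) scaleC"
  by unfold_locales (auto simp: scaleC_scaleR scaleC_add_right scaleC_add_left scaleC_scaleC norm_scaleC)

lemma complex_structure_cdual: "complex_structure cdual cscale"
proof unfold_locales
  show "subspace cdual" unfolding subspace_def using cdual_zero cdual_add cdual_scaleR by blast
qed (auto simp: cdual_cscale cscale_cscale norm_cscale blinfun.add_left blinfun.scaleR_left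
      scaleR_conv_of_real distrib_left distrib_right intro!: blinfun_eqI)

lemma clinear_on_UNIV_cdual:
  fixes G :: "'a::cnormed_vector \<Rightarrow> complex"
  assumes G: "clinear_on scaleC UNIV G" and G_le: "\<And>x. cmod (G x) \<le> K * norm x" and K: "0 \<le> K"
  shows "Blinfun G \<in> cdual" "blinfun_apply (Blinfun G) = G" "norm (Blinfun G) \<le> K"
proof -
  have "bounded_linear G"
  proof (rule bounded_linear_intro[where K = K])
    show "G (r *\<^sub>R x) = r *\<^sub>R G x" for r x
      using G unfolding clinear_on_def by (metis UNIV_I scaleC_scaleR scaleR_conv_of_real)
  qed (use G G_le in \<open>auto simp: clinear_on_def mult.commute\<close>)
  then show G_apply: "blinfun_apply (Blinfun G) = G" by (rule bounded_linear_Blinfun_apply)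
  show "Blinfun G \<in> cdual" using G unfolding cdual_def clinear_on_def by (simp add: G_apply)
  show "norm (Blinfun G) \<le> K" by (rule norm_blinfun_bound[OF K]) (simp add: G_apply G_le)
qed

lemma annih_subset_cdual: "annih V \<subseteq> cdual"
  unfolding annih_def by blast

lemma zero_in_annih: "0 \<in> annih V"
  unfolding annih_def using cdual_zero by simp

lemma annih_scaleR: "f \<in> annih V \<Longrightarrow> r *\<^sub>R f \<in> annih V"
  unfolding annih_def using cdual_scaleR by (auto simp: blinfun.scaleR_left)

lemma csubspace_in_annih: "csubspace_in cscale cdual (annih V)"
  unfolding csubspace_in_def annih_def
  using cdual_zero cdual_add cdual_cscale by (auto simp: blinfun.add_left)

section \<open>Duality between distances to a subspace and to its annihilator\<close>

lemma exists_annih_apply_eq_infdist: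
  fixes V :: "'a::cnormed_vector set"
  assumes "csubspace_in scaleC UNIV V"
  shows "\<exists>\<phi>\<in>annih V. norm \<phi> \<le> 1 \<and> blinfun_apply \<phi> a = of_real (infdist a V)"
proof -
  obtain G where G: "clinear_on scaleC UNIV G" "\<forall>v\<in>V. G v = 0" "\<forall>x. cmod (G x) \<le> norm x"
    "G a = of_real (infdist a V)"
    using complex_structure.annihilating_functional[OF complex_structure_UNIV assms, of a] by auto
  have \<phi>: "Blinfun G \<in> cdual" "blinfun_apply (Blinfun G) = G" "norm (Blinfun G) \<le> 1"
    using clinear_on_UNIV_cdual[OF G(1), of 1] G(3) by auto
  show ?thesis using G \<phi> unfolding annih_def by (intro bexI[of _ "Blinfun G"]) auto
qed

lemma exists_norming_functional:
  fixes a :: "'a::cnormed_vector"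
  shows "\<exists>\<phi>\<in>cdual. norm \<phi> \<le> 1 \<and> blinfun_apply \<phi> a = of_real (norm a)"
proof -
  obtain G where G: "clinear_on scaleC UNIV G" "\<forall>x. cmod (G x) \<le> norm x" "G a = of_real (norm a)"
    using complex_structure.norming_functional[OF complex_structure_UNIV, of a] by auto
  have \<phi>: "Blinfun G \<in> cdual" "blinfun_apply (Blinfun G) = G" "norm (Blinfun G) \<le> 1"
    using clinear_on_UNIV_cdual[OF G(1), of 1] G(2) by auto
  show ?thesis using G \<phi> by (intro bexI[of _ "Blinfun G"]) auto
qed

lemma infdist_annih_le:
  fixes V :: "'a::cnormed_vector set"
  assumes V: "csubspace_in scaleC UNIV V" and \<phi>: "\<phi> \<in> cdual" and t: "0 \<le> t"
    and \<phi>_le: "\<And>v. v \<in> V \<Longrightarrow> cmod (blinfun_apply \<phi> v) \<le> t * norm v"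
  shows "infdist \<phi> (annih V) \<le> t"
proof -
  have "clinear_on scaleC V (blinfun_apply \<phi>)"
    using \<phi> unfolding clinear_on_def cdual_def by (simp add: blinfun.add_right)
  then obtain G where G: "clinear_on scaleC UNIV G" "\<forall>v\<in>V. G v = blinfun_apply \<phi> v"
    "\<forall>x. cmod (G x) \<le> t * norm x"
    using complex_structure.hahn_banach[OF complex_structure_UNIV V _ \<phi>_le t] by auto
  have \<psi>: "Blinfun G \<in> cdual" "blinfun_apply (Blinfun G) = G" "norm (Blinfun G) \<le> t"
    using clinear_on_UNIV_cdual[OF G(1) _ t] G(3) by auto
  have "\<phi> - Blinfun G \<in> annih V"
    unfolding annih_def using cdual_diff[OF \<phi>] \<psi> G(2,3) by (auto simp: blinfun.diff_left)
  then have "infdist \<phi> (annih V) \<le> dist \<phi> (\<phi> - Blinfun G)" by (rule infdist_le)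
  also have "\<dots> \<le> t" using \<psi> G(3) t by (simp add: dist_norm)
  finally show ?thesis .
qed

lemma infdist_ge:
  assumes "A \<noteq> {}" "\<And>a. a \<in> A \<Longrightarrow> d \<le> dist x a"
  shows "d \<le> infdist x A"
  unfolding infdist_notempty[OF assms(1)] by (rule cINF_greatest) (use assms in auto)

lemma cmod_apply_le_norm_mult_infdist:
  fixes V :: "'a::cnormed_vector set"
  assumes \<phi>: "\<phi> \<in> annih V" and "V \<noteq> {}"
  shows "cmod (blinfun_apply \<phi> b) \<le> norm \<phi> * infdist b V"
proof (cases "\<phi> = 0")
  case False
  have "cmod (blinfun_apply \<phi> b) / norm \<phi> \<le> dist b v" if "v \<in> V" for v
  proof -
    have "blinfun_apply \<phi> b = blinfun_apply \<phi> (b - v)"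
      using \<phi> that unfolding annih_def by (simp add: blinfun.diff_right)
    then show ?thesis using norm_blinfun[of \<phi> "b - v"] False by (simp add: dist_norm field_simps)
  qed
  then have "cmod (blinfun_apply \<phi> b) / norm \<phi> \<le> infdist b V" by (rule infdist_ge[OF assms(2)])
  then show ?thesis using False by (simp add: divide_le_eq mult.commute)
qed simp

lemma cmod_apply_le_infdist_annih_mult_norm:
  fixes V :: "'a::cnormed_vector set"
  assumes "w \<in> V"
  shows "cmod (blinfun_apply \<psi> w) \<le> infdist \<psi> (annih V) * norm w"
proof (cases "w = 0")
  case False
  have "cmod (blinfun_apply \<psi> w) / norm w \<le> dist \<psi> f" if "f \<in> annih V" for f
  proof -
    have "blinfun_apply \<psi> w = blinfun_apply (\<psi> - f) w"
      using assms that unfolding annih_def by (simp add: blinfun.diff_left)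
    then show ?thesis using norm_blinfun[of "\<psi> - f" w] False by (simp add: dist_norm field_simps)
  qed
  then have "cmod (blinfun_apply \<psi> w) / norm w \<le> infdist \<psi> (annih V)"
    by (intro infdist_ge) (use zero_in_annih in auto)
  then show ?thesis using False by (simp add: divide_le_eq)
qed simp

lemma Re_apply_le_norm:
  assumes "norm f \<le> 1"
  shows "Re (blinfun_apply f x) \<le> norm x"
proof -
  have "Re (blinfun_apply f x) \<le> norm f * norm x"
    using complex_Re_le_cmod order_trans norm_blinfun by blast
  also have "\<dots> \<le> norm x" using assms by (simp add: mult_left_le_one_le)
  finally show ?thesis .
qed

lemma cmod_apply_le_of_Re_le:
  fixes V :: "'a::cnormed_vector set"
  assumes V: "csubspace_in scaleC UNIV V" and f: "f \<in> cdual"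
    and Re_le: "\<And>v. v \<in> V \<Longrightarrow> norm v = 1 \<Longrightarrow> Re (blinfun_apply f v) \<le> K" and v: "v \<in> V"
  shows "cmod (blinfun_apply f v) \<le> K * norm v"
proof (cases "v = 0")
  case False
  obtain u where u: "cmod u = 1" "u * blinfun_apply f v = cmod (blinfun_apply f v)"
    using exists_unimodular_mult_eq_cmod by blast
  define w where "w = scaleC (u / of_real (norm v)) v"
  have "w \<in> V" using V v unfolding csubspace_in_def w_def by blast
  moreover have "norm w = 1" using u(1) False by (simp add: w_def norm_scaleC norm_divide)
  moreover have "blinfun_apply f w = of_real (cmod (blinfun_apply f v) / norm v)"
    using f u(2) unfolding w_def cdual_def by simp
  ultimately have "cmod (blinfun_apply f v) / norm v \<le> K" using Re_le by force
  then show ?thesis using False by (simp add: divide_le_eq)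
qed simp

lemma exists_unit_Re_apply_gt:
  fixes V :: "'a::cnormed_vector set"
  assumes V: "csubspace_in scaleC UNIV V" and \<phi>: "\<phi> \<in> cdual"
    and t: "0 \<le> t" "t < infdist \<phi> (annih V)"
  shows "\<exists>v\<in>V. norm v = 1 \<and> t < Re (blinfun_apply \<phi> v)"
proof (rule ccontr)
  assume "\<not> ?thesis"
  then have "cmod (blinfun_apply \<phi> v) \<le> t * norm v" if "v \<in> V" for v
    using cmod_apply_le_of_Re_le[OF V \<phi> _ that, of t] by force
  then have "infdist \<phi> (annih V) \<le> t" by (rule infdist_annih_le[OF V \<phi> t(1)])
  with t(2) show False by simp
qed

section \<open>Semicontinuity of the distance functions\<close>

lemma continuous_map_lower_vietorisD:
  assumes cont: "continuous_map X (lower_vietoris sc B) \<kappa>"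
    and sub: "\<forall>y\<in>topspace X. csubspace_in sc B (\<kappa> y)"
    and x: "x \<in> topspace X" and p: "p \<in> \<kappa> x" and r: "0 < r"
  shows "\<exists>W. openin X W \<and> x \<in> W \<and> (\<forall>y\<in>W. \<exists>q\<in>\<kappa> y. dist q p < r)"
proof -
  define Nb where "Nb = {V. csubspace_in sc B V \<and> V \<inter> (B \<inter> ball p r) \<noteq> {}}"
  have "openin (top_of_set B) (B \<inter> ball p r)" by blast
  then have "openin (lower_vietoris sc B) Nb"
    unfolding lower_vietoris_def Nb_def by (intro topology_generated_by_Basis) blast
  then have "openin X {y \<in> topspace X. \<kappa> y \<in> Nb}"
    using openin_continuous_map_preimage[OF cont] by blast
  moreover have "p \<in> \<kappa> x \<inter> (B \<inter> ball p r)" using x p r sub unfolding csubspace_in_def by auto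
  then have "x \<in> {y \<in> topspace X. \<kappa> y \<in> Nb}" using x sub unfolding Nb_def by blast
  moreover have "\<forall>y\<in>{y \<in> topspace X. \<kappa> y \<in> Nb}. \<exists>q\<in>\<kappa> y. dist q p < r"
    unfolding Nb_def by (auto simp: dist_commute)
  ultimately show ?thesis by blast
qed

lemma continuous_map_lower_vietorisI:
  assumes sub: "\<forall>y\<in>topspace X. csubspace_in sc B (\<kappa> y)"
    and nbhds: "\<And>x p r. x \<in> topspace X \<Longrightarrow> p \<in> \<kappa> x \<Longrightarrow> 0 < r \<Longrightarrow>
      \<exists>W. openin X W \<and> x \<in> W \<and> (\<forall>y\<in>W. \<exists>q\<in>\<kappa> y. dist q p < r)"
  shows "continuous_map X (lower_vietoris sc B) \<kappa>"
  unfolding lower_vietoris_def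
proof (rule continuous_on_generated_topo)
  fix Nb assume "Nb \<in> {{V. csubspace_in sc B V \<and> V \<inter> U \<noteq> {}} | U. openin (top_of_set B) U}"
  then obtain U where Nb: "Nb = {V. csubspace_in sc B V \<and> V \<inter> U \<noteq> {}}"
    and U: "openin (top_of_set B) U" by blast
  show "openin X (\<kappa> -` Nb \<inter> topspace X)"
  proof (subst openin_subopen, intro ballI)
    fix x assume "x \<in> \<kappa> -` Nb \<inter> topspace X"
    then obtain p where x: "x \<in> topspace X" and p: "p \<in> \<kappa> x" "p \<in> U" using Nb by auto
    obtain r where r: "0 < r" "ball p r \<inter> B \<subseteq> U" using U p(2) unfolding openin_contains_ball by blast
    obtain W where W: "openin X W" "x \<in> W" "\<forall>y\<in>W. \<exists>q\<in>\<kappa> y. dist q p < r"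
      using nbhds[OF x p(1) r(1)] by blast
    have "y \<in> \<kappa> -` Nb" if yW: "y \<in> W" for y
    proof -
      have y: "y \<in> topspace X" using W(1) yW openin_subset by blast
      obtain q where q: "q \<in> \<kappa> y" "dist q p < r" using W(3) yW by blast
      have "csubspace_in sc B (\<kappa> y)" using sub y by blast
      moreover have "q \<in> U" using q r(2) calculation unfolding csubspace_in_def by (auto simp: dist_commute)
      ultimately show ?thesis using Nb q(1) by blast
    qed
    then have "W \<subseteq> \<kappa> -` Nb \<inter> topspace X" using openin_subset[OF W(1)] by blast
    then show "\<exists>T. openin X T \<and> x \<in> T \<and> T \<subseteq> \<kappa> -` Nb \<inter> topspace X"
      using W(1,2) by blast
  qed
next
  show "\<kappa> ` topspace X \<subseteq> \<Union>{{V. csubspace_in sc B V \<and> V \<inter> U \<noteq> {}} | U. openin (top_of_set B) U}"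
  proof (rule image_subsetI, rule UnionI[of "{V. csubspace_in sc B V \<and> V \<inter> B \<noteq> {}}"])
    show "{V. csubspace_in sc B V \<and> V \<inter> B \<noteq> {}}
        \<in> {{V. csubspace_in sc B V \<and> V \<inter> U \<noteq> {}} | U. openin (top_of_set B) U}"
      by (intro CollectI exI[of _ B]) simp
    show "\<kappa> y \<in> {V. csubspace_in sc B V \<and> V \<inter> B \<noteq> {}}" if "y \<in> topspace X" for y
      using sub that unfolding csubspace_in_def by blast
  qed
qed

lemma continuous_map_prod_top_of_set_realI:
  fixes f :: "'b::metric_space \<times> 'x \<Rightarrow> real"
  assumes upper: "\<And>a x e. a \<in> B \<Longrightarrow> x \<in> topspace X \<Longrightarrow> 0 < e \<Longrightarrow>
      \<exists>r>0. \<exists>W. openin X W \<and> x \<in> W \<and> (\<forall>a'. \<forall>y\<in>W. dist a' a < r \<longrightarrow> f (a', y) < f (a, x) + e)"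
    and lower: "\<And>a x e. a \<in> B \<Longrightarrow> x \<in> topspace X \<Longrightarrow> 0 < e \<Longrightarrow>
      \<exists>r>0. \<exists>W. openin X W \<and> x \<in> W \<and> (\<forall>a'. \<forall>y\<in>W. dist a' a < r \<longrightarrow> f (a, x) - e < f (a', y))"
  shows "continuous_map (prod_topology (top_of_set B) X) euclideanreal f"
proof -
  have "continuous_map (prod_topology (top_of_set B) X) Met_TC.mtopology f"
    unfolding Met_TC.continuous_map_to_metric
  proof (intro ballI allI impI)
    fix p and e :: real assume "p \<in> topspace (prod_topology (top_of_set B) X)" and e: "0 < e"
    then obtain a x where p: "p = (a, x)" and a: "a \<in> B" and x: "x \<in> topspace X" by auto
    obtain r1 W1 where r1: "0 < r1" "openin X W1" "x \<in> W1"
      and W1: "\<forall>a'. \<forall>y\<in>W1. dist a' a < r1 \<longrightarrow> f (a', y) < f (a, x) + e"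
      using upper[OF a x e] by blast
    obtain r2 W2 where r2: "0 < r2" "openin X W2" "x \<in> W2"
      and W2: "\<forall>a'. \<forall>y\<in>W2. dist a' a < r2 \<longrightarrow> f (a, x) - e < f (a', y)"
      using lower[OF a x e] by blast
    define U where "U = (B \<inter> ball a (min r1 r2)) \<times> (W1 \<inter> W2)"
    have "openin (prod_topology (top_of_set B) X) U"
      unfolding U_def using r1(2) r2(2) by (auto simp: openin_prod_Times_iff)
    moreover have "p \<in> U" unfolding U_def p using a r1 r2 by simp
    moreover have "\<forall>q\<in>U. f q \<in> Met_TC.mball (f p) e"
      unfolding U_def p using W1 W2 by (force simp: dist_real_def dist_commute)
    ultimately show "\<exists>U. openin (prod_topology (top_of_set B) X) U \<and> p \<in> U \<and> (\<forall>q\<in>U. f q \<in> Met_TC.mball (f p) e)"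
      by blast
  qed
  then show ?thesis by simp
qed

lemma continuous_map_prod_top_of_set_slice_nbhd:
  assumes f: "continuous_map (prod_topology (top_of_set B) X) euclideanreal f"
    and "a \<in> B" "x \<in> topspace X" "0 < e"
  shows "\<exists>W. openin X W \<and> x \<in> W \<and> (\<forall>y\<in>W. \<bar>f (a, y) - f (a, x)\<bar> < e)"
proof -
  have "continuous_map X euclideanreal (f \<circ> (\<lambda>y. (a, y)))"
    by (rule continuous_map_compose[OF _ f]) (use assms(2) in \<open>auto intro: continuous_map_pairedI\<close>)
  then have "continuous_map X Met_TC.mtopology (\<lambda>y. f (a, y))" by (simp add: o_def)
  then show ?thesis
    using assms(3,4) unfolding Met_TC.continuous_map_to_metric by (auto simp: dist_real_def abs_minus_commute)
qed

lemma infdist_upper_semicontinuous: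
  assumes cont: "continuous_map X (lower_vietoris sc B) \<kappa>"
    and sub: "\<forall>y\<in>topspace X. csubspace_in sc B (\<kappa> y)" and x: "x \<in> topspace X" and e: "0 < e"
  shows "\<exists>r>0. \<exists>W. openin X W \<and> x \<in> W \<and>
    (\<forall>a'. \<forall>y\<in>W. dist a' a < r \<longrightarrow> infdist a' (\<kappa> y) < infdist a (\<kappa> x) + e)"
proof -
  have e3: "0 < e / 3" using e by simp
  have ne: "\<kappa> x \<noteq> {}" using sub x unfolding csubspace_in_def by blast
  then have "(INF p\<in>\<kappa> x. dist a p) < infdist a (\<kappa> x) + e / 3"
    using e3 by (simp add: infdist_notempty)
  then obtain p where p: "p \<in> \<kappa> x" "dist a p < infdist a (\<kappa> x) + e / 3"
    unfolding cINF_less_iff[OF ne bdd_below_image_dist] by blast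
  obtain W where W: "openin X W" "x \<in> W" "\<forall>y\<in>W. \<exists>q\<in>\<kappa> y. dist q p < e / 3"
    using continuous_map_lower_vietorisD[OF cont sub x p(1) e3] by blast
  have "infdist a' (\<kappa> y) < infdist a (\<kappa> x) + e" if "y \<in> W" "dist a' a < e / 3" for a' y
  proof -
    obtain q where q: "q \<in> \<kappa> y" "dist q p < e / 3" using W(3) \<open>y \<in> W\<close> by blast
    have "infdist a' (\<kappa> y) \<le> dist a' a + dist a p + dist p q"
      using infdist_le[OF q(1), of a'] dist_triangle[of a' q a] dist_triangle[of a q p] by linarith
    then show ?thesis using that(2) p(2) q(2) by (simp add: dist_commute)
  qed
  then show ?thesis using W e by (intro exI[of _ "e / 3"]) auto
qed

lemma exists_small_perturbation:
  fixes d K e :: real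
  assumes "0 < e"
  shows "\<exists>r>0. r \<le> 1 \<and> (\<forall>D. d - r * K \<le> (1 + r) * D \<longrightarrow> d - e < D)"
proof -
  have "((\<lambda>r. (d - r * K) / (1 + r)) \<longlongrightarrow> (d - 0 * K) / (1 + 0)) (at_right 0)"
    by (intro tendsto_intros) auto
  then have "\<forall>\<^sub>F r in at_right 0. d - e < (d - r * K) / (1 + r)"
    using assms by (intro order_tendstoD(1)) auto
  moreover have "\<forall>\<^sub>F r in at_right (0::real). 0 < r \<and> r \<le> 1"
    by (simp add: eventually_at_right_field) (meson zero_less_one less_imp_le)
  ultimately obtain r where r: "0 < r" "r \<le> 1" "d - e < (d - r * K) / (1 + r)"
    using eventually_happens'[OF trivial_limit_at_right_real] eventually_conj by blast
  have "d - e < D" if "d - r * K \<le> (1 + r) * D" for D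
  proof -
    have "(d - r * K) / (1 + r) \<le> D" using that r(1) by (subst pos_divide_le_eq) (auto simp: mult.commute)
    with r(3) show ?thesis by linarith
  qed
  with r show ?thesis by blast
qed

lemma cmod_blinfun_apply_perturb:
  "cmod (blinfun_apply f a)
     \<le> cmod (blinfun_apply g b) + norm (f - g) * norm a + norm g * norm (a - b)"
proof -
  have "blinfun_apply f a = blinfun_apply g b + blinfun_apply (f - g) a + blinfun_apply g (a - b)"
    by (simp add: blinfun.diff_left blinfun.diff_right)
  then have "cmod (blinfun_apply f a)
      \<le> cmod (blinfun_apply g b) + cmod (blinfun_apply (f - g) a) + cmod (blinfun_apply g (a - b))"
    by (metis norm_triangle_ineq order_trans add_right_mono)
  then show ?thesis using norm_blinfun[of "f - g" a] norm_blinfun[of g "a - b"] by linarith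
qed

lemma infdist_lower_semicontinuous_of_annih:
  fixes \<kappa> :: "'x \<Rightarrow> 'a::cnormed_vector set"
  assumes cont: "continuous_map X (lower_vietoris cscale cdual) (annih \<circ> \<kappa>)"
    and sub: "\<forall>y\<in>topspace X. csubspace_in scaleC UNIV (\<kappa> y)" and x: "x \<in> topspace X" and e: "0 < e"
  shows "\<exists>r>0. \<exists>W. openin X W \<and> x \<in> W \<and>
    (\<forall>a'. \<forall>y\<in>W. dist a' a < r \<longrightarrow> infdist a (\<kappa> x) - e < infdist a' (\<kappa> y))"
proof -
  define d where "d = infdist a (\<kappa> x)"
  obtain \<phi>0 where \<phi>0: "\<phi>0 \<in> annih (\<kappa> x)" "norm \<phi>0 \<le> 1" "blinfun_apply \<phi>0 a = of_real d"
    using exists_annih_apply_eq_infdist sub x unfolding d_def by blast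
  obtain r where r: "0 < r" "r \<le> 1" and perturb: "\<And>D. d - r * (norm a + 2) \<le> (1 + r) * D \<Longrightarrow> d - e < D"
    using exists_small_perturbation[OF e] by blast
  have sub_annih: "\<forall>y\<in>topspace X. csubspace_in cscale cdual ((annih \<circ> \<kappa>) y)"
    by (simp add: csubspace_in_annih)
  obtain W where W: "openin X W" "x \<in> W" "\<forall>y\<in>W. \<exists>\<phi>\<in>annih (\<kappa> y). dist \<phi> \<phi>0 < r"
    using continuous_map_lower_vietorisD[OF cont sub_annih x _ r(1), of \<phi>0] \<phi>0(1) by auto
  have "d - e < infdist a' (\<kappa> y)" if yW: "y \<in> W" and a': "dist a' a < r" for a' y
  proof -
    obtain \<phi> where \<phi>: "\<phi> \<in> annih (\<kappa> y)" "dist \<phi> \<phi>0 < r" using W(3) yW by blast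
    define D where "D = infdist a' (\<kappa> y)"
    have "\<kappa> y \<noteq> {}" using sub W(1) yW openin_subset unfolding csubspace_in_def by blast
    then have "cmod (blinfun_apply \<phi> a') \<le> norm \<phi> * D"
      unfolding D_def by (rule cmod_apply_le_norm_mult_infdist[OF \<phi>(1)])
    moreover have "norm \<phi> \<le> 1 + r"
      using norm_triangle_ineq[of "\<phi> - \<phi>0" \<phi>0] \<phi>0(2) \<phi>(2) by (simp add: dist_norm)
    moreover have "norm (\<phi>0 - \<phi>) * norm a \<le> r * norm a"
      using \<phi>(2) by (intro mult_right_mono) (auto simp: dist_norm norm_minus_commute)
    moreover have "norm \<phi> * norm (a - a') \<le> (1 + r) * r"
      using calculation(2) a' r(1) by (intro mult_mono) (auto simp: dist_norm norm_minus_commute)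
    moreover have "0 \<le> D" unfolding D_def by (rule infdist_nonneg)
    moreover have "d = cmod (blinfun_apply \<phi>0 a)" using \<phi>0(3) infdist_nonneg[of a] unfolding d_def by simp
    ultimately have "d \<le> (1 + r) * D + r * norm a + (1 + r) * r"
      using cmod_blinfun_apply_perturb[of \<phi>0 a \<phi> a'] mult_right_mono[of "norm \<phi>" "1 + r" D] by linarith
    then have "d - r * (norm a + 2) \<le> (1 + r) * D"
      using r by (simp add: algebra_simps) (use mult_left_mono[OF r(2), of r] in linarith)
    then show ?thesis unfolding D_def by (rule perturb)
  qed
  then show ?thesis using W(1,2) r(1) unfolding d_def by blast
qed

lemma infdist_annih_lower_semicontinuous:
  fixes \<kappa> :: "'x \<Rightarrow> 'a::cnormed_vector set"
  assumes cont: "continuous_map X (lower_vietoris scaleC UNIV) \<kappa>"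
    and sub: "\<forall>y\<in>topspace X. csubspace_in scaleC UNIV (\<kappa> y)" and x: "x \<in> topspace X" and e: "0 < e"
    and \<phi>: "\<phi> \<in> cdual"
  shows "\<exists>r>0. \<exists>W. openin X W \<and> x \<in> W \<and>
    (\<forall>\<phi>'. \<forall>y\<in>W. dist \<phi>' \<phi> < r \<longrightarrow> infdist \<phi> (annih (\<kappa> x)) - e < infdist \<phi>' (annih (\<kappa> y)))"
proof (cases "infdist \<phi> (annih (\<kappa> x)) < e")
  case True
  then show ?thesis using x
    by (intro exI[of _ 1] conjI exI[of _ "topspace X"]) (auto intro!: less_le_trans[OF _ infdist_nonneg])
next
  case False
  define t where "t = infdist \<phi> (annih (\<kappa> x)) - e / 2"
  have t: "0 \<le> t" "t < infdist \<phi> (annih (\<kappa> x))" using False e unfolding t_def by auto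
  obtain v0 where v0: "v0 \<in> \<kappa> x" "norm v0 = 1" "t < Re (blinfun_apply \<phi> v0)"
    using exists_unit_Re_apply_gt[OF _ \<phi> t] sub x by blast
  obtain r where r: "0 < r" "r \<le> 1"
    and perturb: "\<And>D. t - r * (norm \<phi> + 2) \<le> (1 + r) * D \<Longrightarrow> t - e / 2 < D"
    using exists_small_perturbation[of "e / 2" t "norm \<phi> + 2"] e by auto
  obtain W where W: "openin X W" "x \<in> W" "\<forall>y\<in>W. \<exists>q\<in>\<kappa> y. dist q v0 < r"
    using continuous_map_lower_vietorisD[OF cont sub x v0(1) r(1)] by blast
  have "t - e / 2 < infdist \<phi>' (annih (\<kappa> y))" if yW: "y \<in> W" and \<phi>': "dist \<phi>' \<phi> < r" for \<phi>' y
  proof -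
    obtain q where q: "q \<in> \<kappa> y" "dist q v0 < r" using W(3) yW by blast
    define D where "D = infdist \<phi>' (annih (\<kappa> y))"
    have "cmod (blinfun_apply \<phi>' q) \<le> D * norm q"
      unfolding D_def by (rule cmod_apply_le_infdist_annih_mult_norm[OF q(1)])
    moreover have "norm q \<le> 1 + r"
      using norm_triangle_ineq[of "q - v0" v0] v0(2) q(2) by (simp add: dist_norm)
    moreover have "norm (\<phi> - \<phi>') * norm v0 \<le> r"
      using \<phi>' v0(2) by (simp add: dist_norm norm_minus_commute)
    moreover have "norm \<phi>' * norm (v0 - q) \<le> (norm \<phi> + r) * r"
      using norm_triangle_ineq[of "\<phi>' - \<phi>" \<phi>] \<phi>' q(2) r(1)
      by (intro mult_mono) (auto simp: dist_norm norm_minus_commute)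
    moreover have "0 \<le> D" unfolding D_def by (rule infdist_nonneg)
    moreover have "t < cmod (blinfun_apply \<phi> v0)" using v0(3) complex_Re_le_cmod less_le_trans by blast
    ultimately have "t \<le> D * (1 + r) + r + (norm \<phi> + r) * r"
      using cmod_blinfun_apply_perturb[of \<phi> v0 \<phi>' q] mult_left_mono[of "norm q" "1 + r" D] by linarith
    then have "t - r * (norm \<phi> + 2) \<le> (1 + r) * D"
      using r by (simp add: algebra_simps) (use mult_left_mono[OF r(2), of r] in linarith)
    then show ?thesis unfolding D_def by (rule perturb)
  qed
  moreover have "t - e / 2 = infdist \<phi> (annih (\<kappa> x)) - e" unfolding t_def by simp
  ultimately show ?thesis using W(1,2) r(1) by (intro exI[of _ r] conjI exI[of _ W]) auto
qed

lemma continuous_infdist_of_lower_vietoris: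
  fixes \<kappa> :: "'x \<Rightarrow> 'a::cnormed_vector set"
  assumes sub: "\<forall>y\<in>topspace X. csubspace_in scaleC UNIV (\<kappa> y)"
    and cont: "continuous_map X (lower_vietoris scaleC UNIV) \<kappa>"
    and cont_annih: "continuous_map X (lower_vietoris cscale cdual) (annih \<circ> \<kappa>)"
  shows "continuous_map (prod_topology (top_of_set UNIV) X) euclideanreal (\<lambda>(a, x). infdist a (\<kappa> x))"
    and "continuous_map (prod_topology (top_of_set cdual) X) euclideanreal
      (\<lambda>(\<phi>, x). infdist \<phi> ((annih \<circ> \<kappa>) x))"
proof -
  have sub_annih: "\<forall>y\<in>topspace X. csubspace_in cscale cdual ((annih \<circ> \<kappa>) y)"
    by (simp add: csubspace_in_annih)
  show "continuous_map (prod_topology (top_of_set UNIV) X) euclideanreal (\<lambda>(a, x). infdist a (\<kappa> x))"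
    by (rule continuous_map_prod_top_of_set_realI)
      (use infdist_upper_semicontinuous[OF cont sub] infdist_lower_semicontinuous_of_annih[OF cont_annih sub]
        in simp_all)
  show "continuous_map (prod_topology (top_of_set cdual) X) euclideanreal
      (\<lambda>(\<phi>, x). infdist \<phi> ((annih \<circ> \<kappa>) x))"
    by (rule continuous_map_prod_top_of_set_realI)
      (use infdist_upper_semicontinuous[OF cont_annih sub_annih] infdist_annih_lower_semicontinuous[OF cont sub]
        in simp_all)
qed

theorem cont_normed_qvb_of_quotient_vector_bundles:
  fixes \<kappa> :: "'x \<Rightarrow> 'a::cnormed_vector set"
  assumes "\<forall>y\<in>topspace X. csubspace_in scaleC UNIV (\<kappa> y)"
    and "quotient_vector_bundle X scaleC UNIV \<kappa>" "quotient_vector_bundle X cscale cdual (annih \<circ> \<kappa>)"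
  shows "cont_normed_qvb X scaleC UNIV \<kappa> \<and> cont_normed_qvb X cscale cdual (annih \<circ> \<kappa>)"
  using assms continuous_infdist_of_lower_vietoris[OF assms(1)]
  unfolding cont_normed_qvb_def quotient_vector_bundle_def by blast

section \<open>Locally uniformly convex spaces\<close>

lemma parallelogram_defect_nonneg:
  fixes a b :: "'a::real_normed_vector"
  shows "0 \<le> 2 * (norm a)\<^sup>2 + 2 * (norm b)\<^sup>2 - (norm (a + b))\<^sup>2"
proof -
  have "(norm (a + b))\<^sup>2 \<le> (norm a + norm b)\<^sup>2"
    by (rule power_mono[OF norm_triangle_ineq norm_ge_zero])
  also have "\<dots> \<le> 2 * (norm a)\<^sup>2 + 2 * (norm b)\<^sup>2"
    using sum_squares_ge_zero[of "norm a - norm b" 0] by (simp add: power2_eq_square algebra_simps)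
  finally show ?thesis by simp
qed

lemma locally_uniformly_convexD:
  fixes a :: "'a::real_normed_vector"
  assumes luc: "locally_uniformly_convex TYPE('a)" and e: "0 < e"
  shows "\<exists>\<delta>>0. \<forall>b::'a. 2 * (norm a)\<^sup>2 + 2 * (norm b)\<^sup>2 - (norm (a + b))\<^sup>2 < \<delta> \<longrightarrow> norm (a - b) < e"
proof (rule ccontr)
  define Q where "Q b = 2 * (norm a)\<^sup>2 + 2 * (norm b)\<^sup>2 - (norm (a + b))\<^sup>2" for b :: 'a
  assume "\<not> ?thesis"
  then have "\<forall>n. \<exists>b. Q b < inverse (real (Suc n)) \<and> e \<le> norm (a - b)"
    unfolding Q_def by (metis not_le of_nat_0_less_iff positive_imp_inverse_positive zero_less_Suc)
  then obtain s where s: "\<And>n. Q (s n) < inverse (real (Suc n))" "\<And>n. e \<le> norm (a - s n)" by metis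
  have "(\<lambda>n. Q (s n)) \<longlonglongrightarrow> 0"
  proof (rule real_tendsto_sandwich[of "\<lambda>n. 0" _ _ "\<lambda>n. inverse (real (Suc n))"])
    show "\<forall>\<^sub>F n in sequentially. 0 \<le> Q (s n)"
      unfolding Q_def using parallelogram_defect_nonneg[of a] by simp
    show "\<forall>\<^sub>F n in sequentially. Q (s n) \<le> inverse (real (Suc n))"
      using s(1) by (intro always_eventually allI less_imp_le)
  qed (simp_all only: LIMSEQ_inverse_real_of_nat tendsto_const)
  then have "(\<lambda>n. norm (a - s n)) \<longlonglongrightarrow> 0"
    using luc unfolding locally_uniformly_convex_def Q_def by blast
  then have "\<forall>\<^sub>F n in sequentially. norm (a - s n) < e" using e by (rule order_tendstoD(2))
  then obtain n where "norm (a - s n) < e" unfolding eventually_sequentially by blast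
  with s(2)[of n] show False by simp
qed

lemma parallelogram_defect_le:
  fixes \<phi> :: "'a::real_normed_vector \<Rightarrow>\<^sub>L complex"
  assumes \<phi>: "norm \<phi> \<le> 1" and w: "norm w = norm v" and v: "Re (blinfun_apply \<phi> v) = norm v"
    and \<eta>: "(1 - \<eta>) * norm v \<le> Re (blinfun_apply \<phi> w)" "\<eta> \<le> 2"
  shows "2 * (norm v)\<^sup>2 + 2 * (norm w)\<^sup>2 - (norm (v + w))\<^sup>2 \<le> 4 * \<eta> * (norm v)\<^sup>2"
proof -
  have "(2 - \<eta>) * norm v \<le> Re (blinfun_apply \<phi> (v + w))"
    using v \<eta>(1) by (simp add: blinfun.add_right algebra_simps)
  also have "\<dots> \<le> norm (v + w)" by (rule Re_apply_le_norm[OF \<phi>])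
  finally have "((2 - \<eta>) * norm v)\<^sup>2 \<le> (norm (v + w))\<^sup>2"
    by (rule power_mono) (use \<eta>(2) in simp)
  moreover have "0 \<le> (\<eta> * norm v)\<^sup>2" by simp
  ultimately show ?thesis using w by (simp add: power2_eq_square algebra_simps)
qed

text \<open>A unit functional phi norming v0 has distance at least one to the annihilator of V0. If
  its distance to the annihilator of V is almost as large, phi almost norms a unit vector of V,
  and the multiple of that vector with the norm of v0 has small parallelogram defect against v0.\<close>

lemma locally_uniformly_convex_close_vector:
  fixes v0 :: "'a::cnormed_vector"
  assumes luc: "locally_uniformly_convex TYPE('a)" and \<rho>: "0 < \<rho>" and v0: "v0 \<in> V0"
  shows "\<exists>\<phi>\<in>cdual. \<exists>\<eta>>0. \<forall>V. csubspace_in scaleC UNIV V \<longrightarrow>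
    infdist \<phi> (annih V0) - \<eta> < infdist \<phi> (annih V) \<longrightarrow> (\<exists>w\<in>V. dist w v0 < \<rho>)"
proof (cases "v0 = 0")
  case True
  have "\<exists>w\<in>V. dist w v0 < \<rho>" if "csubspace_in scaleC UNIV V" for V
    using that True \<rho> unfolding csubspace_in_def by force
  then show ?thesis using cdual_zero by (intro bexI[of _ 0] exI[of _ 1]) auto
next
  case False
  define n where "n = norm v0"
  have n: "0 < n" using False n_def by simp
  obtain \<delta> where \<delta>: "0 < \<delta>"
    and luc_\<delta>: "\<And>w. 2 * (norm v0)\<^sup>2 + 2 * (norm w)\<^sup>2 - (norm (v0 + w))\<^sup>2 < \<delta> \<Longrightarrow> norm (v0 - w) < \<rho>"
    using locally_uniformly_convexD[OF luc \<rho>] by blast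
  define \<eta> where "\<eta> = min (1 / 2) (\<delta> / (8 * n\<^sup>2))"
  have \<eta>: "0 < \<eta>" "\<eta> \<le> 1 / 2" "4 * \<eta> * n\<^sup>2 < \<delta>"
    using \<delta> n by (auto simp: \<eta>_def min_def field_simps)
  obtain \<phi> where \<phi>: "\<phi> \<in> cdual" "norm \<phi> \<le> 1" "blinfun_apply \<phi> v0 = of_real n"
    using exists_norming_functional unfolding n_def by blast
  have "n \<le> infdist \<phi> (annih V0) * n"
    using cmod_apply_le_infdist_annih_mult_norm[OF v0, of \<phi>] \<phi>(3) n unfolding n_def by simp
  then have V0: "1 \<le> infdist \<phi> (annih V0)" using n by simp
  have "\<exists>w\<in>V. dist w v0 < \<rho>"
    if V: "csubspace_in scaleC UNIV V" and close: "infdist \<phi> (annih V0) - \<eta> < infdist \<phi> (annih V)" for V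
  proof -
    obtain v where v: "v \<in> V" "norm v = 1" "1 - \<eta> < Re (blinfun_apply \<phi> v)"
      using exists_unit_Re_apply_gt[OF V \<phi>(1), of "1 - \<eta>"] \<eta> V0 close by auto
    define w where "w = n *\<^sub>R v"
    have "w \<in> V"
      unfolding w_def using v(1) complex_structure.csubspace_in_subspace[OF complex_structure_UNIV V]
      by (rule subspace_scale[rotated])
    moreover have "norm w = norm v0" using n v(2) unfolding w_def n_def by simp
    moreover have "(1 - \<eta>) * norm v0 \<le> Re (blinfun_apply \<phi> w)"
      using v(3) n unfolding w_def n_def by (simp add: blinfun.scaleR_right mult.commute)
    moreover have "Re (blinfun_apply \<phi> v0) = norm v0" using \<phi>(3) n_def by simp
    ultimately have "2 * (norm v0)\<^sup>2 + 2 * (norm w)\<^sup>2 - (norm (v0 + w))\<^sup>2 < \<delta>"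
      using parallelogram_defect_le[OF \<phi>(2), of w v0 \<eta>] \<eta> unfolding n_def by force
    then show ?thesis using \<open>w \<in> V\<close> luc_\<delta> by (force simp: dist_norm norm_minus_commute)
  qed
  then show ?thesis using \<phi>(1) \<eta>(1) by blast
qed

theorem lower_vietoris_of_continuous_infdist_annih:
  fixes \<kappa> :: "'x \<Rightarrow> 'a::cnormed_vector set"
  assumes luc: "locally_uniformly_convex TYPE('a)"
    and sub: "\<forall>y\<in>topspace X. csubspace_in scaleC UNIV (\<kappa> y)"
    and cont: "continuous_map (prod_topology (top_of_set cdual) X) euclideanreal
      (\<lambda>(\<phi>, x). infdist \<phi> ((annih \<circ> \<kappa>) x))"
  shows "continuous_map X (lower_vietoris scaleC UNIV) \<kappa>"
proof (rule continuous_map_lower_vietorisI[OF sub])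
  fix x v0 and \<rho> :: real assume x: "x \<in> topspace X" and v0: "v0 \<in> \<kappa> x" and \<rho>: "0 < \<rho>"
  obtain \<phi> \<eta> where \<phi>: "\<phi> \<in> cdual" and \<eta>: "0 < \<eta>" and close: "\<And>V. csubspace_in scaleC UNIV V \<Longrightarrow>
      infdist \<phi> (annih (\<kappa> x)) - \<eta> < infdist \<phi> (annih V) \<Longrightarrow> \<exists>w\<in>V. dist w v0 < \<rho>"
    using locally_uniformly_convex_close_vector[OF luc \<rho> v0] by blast
  obtain W where W: "openin X W" "x \<in> W"
    "\<forall>y\<in>W. \<bar>infdist \<phi> (annih (\<kappa> y)) - infdist \<phi> (annih (\<kappa> x))\<bar> < \<eta>"
    using continuous_map_prod_top_of_set_slice_nbhd[OF cont \<phi> x \<eta>] by auto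
  have "\<exists>w\<in>\<kappa> y. dist w v0 < \<rho>" if "y \<in> W" for y
    using close[of "\<kappa> y"] sub W openin_subset that by (force simp: abs_less_iff)
  with W(1,2) show "\<exists>W. openin X W \<and> x \<in> W \<and> (\<forall>y\<in>W. \<exists>q\<in>\<kappa> y. dist q v0 < \<rho>)" by blast
qed

section \<open>Reflexive Frechet smooth spaces\<close>

lemma frechet_smooth_norm_add_diff_lt:
  fixes a :: "'a::real_normed_vector"
  assumes smooth: "frechet_smooth TYPE('a)" and a: "norm a = 1" and e: "0 < e"
  shows "\<exists>\<delta>>0. \<forall>b. norm b = 1 \<longrightarrow> norm (a + \<delta> *\<^sub>R b) + norm (a - \<delta> *\<^sub>R b) < 2 + \<delta> * e"
proof -
  obtain L :: "'a \<Rightarrow> real" where L_def: "\<forall>\<epsilon>>0. \<exists>\<eta>>0. \<forall>\<delta> b. \<delta> \<noteq> 0 \<and> \<bar>\<delta>\<bar> < \<eta> \<and> norm b = 1 \<longrightarrow>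
      \<bar>(norm (a - \<delta> *\<^sub>R b) - norm a) / \<delta> - L b\<bar> < \<epsilon>"
    using smooth a unfolding frechet_smooth_def by blast
  define \<epsilon> where "\<epsilon> = e / 2"
  have "0 < \<epsilon>" using e unfolding \<epsilon>_def by simp
  with L_def obtain \<eta> where \<eta>: "0 < \<eta>" and L: "\<And>\<delta> b. \<delta> \<noteq> 0 \<Longrightarrow> \<bar>\<delta>\<bar> < \<eta> \<Longrightarrow> norm b = 1 \<Longrightarrow>
      \<bar>(norm (a - \<delta> *\<^sub>R b) - 1) / \<delta> - L b\<bar> < \<epsilon>"
    using a by auto
  define \<delta> where "\<delta> = \<eta> / 2"
  have \<delta>: "0 < \<delta>" "\<delta> < \<eta>" using \<eta> unfolding \<delta>_def by auto
  have "norm (a + \<delta> *\<^sub>R b) + norm (a - \<delta> *\<^sub>R b) < 2 + \<delta> * e" if b: "norm b = 1" for b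
  proof -
    have "\<bar>(norm (a - \<delta> *\<^sub>R b) - 1) / \<delta> - L b\<bar> < \<epsilon>" using L[of \<delta> b] \<delta> b by simp
    then have "(norm (a - \<delta> *\<^sub>R b) - 1) / \<delta> < L b + \<epsilon>" by (simp add: abs_less_iff)
    then have minus: "norm (a - \<delta> *\<^sub>R b) - 1 < \<delta> * (L b + \<epsilon>)"
      using \<delta>(1) by (simp add: divide_less_eq mult.commute)
    have "\<bar>(norm (a + \<delta> *\<^sub>R b) - 1) / (- \<delta>) - L b\<bar> < \<epsilon>" using L[of "- \<delta>" b] \<delta> b by simp
    then have "L b - \<epsilon> < (1 - norm (a + \<delta> *\<^sub>R b)) / \<delta>"
      by (simp add: abs_less_iff divide_minus_right minus_divide_left)
    then have plus: "norm (a + \<delta> *\<^sub>R b) - 1 < \<delta> * (\<epsilon> - L b)"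
      using \<delta>(1) by (simp add: less_divide_eq algebra_simps)
    have "\<delta> * (L b + \<epsilon>) + \<delta> * (\<epsilon> - L b) = \<delta> * e" by (simp add: \<epsilon>_def algebra_simps)
    with minus plus show ?thesis by linarith
  qed
  with \<delta>(1) show ?thesis by blast
qed

lemma smulian_frechet_smooth:
  fixes a :: "'a::cnormed_vector"
  assumes smooth: "frechet_smooth TYPE('a)" and a: "norm a = 1"
    and f0: "f0 \<in> cdual" "norm f0 \<le> 1" "blinfun_apply f0 a = 1" and e: "0 < e"
  shows "\<exists>\<theta>>0. \<forall>f\<in>cdual. norm f \<le> 1 \<longrightarrow> 1 - \<theta> < Re (blinfun_apply f a) \<longrightarrow> norm (f - f0) \<le> e"
proof -
  obtain \<delta> where \<delta>: "0 < \<delta>"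
    and sum_lt: "\<And>b. norm b = 1 \<Longrightarrow> norm (a + \<delta> *\<^sub>R b) + norm (a - \<delta> *\<^sub>R b) < 2 + \<delta> * (e / 2)"
    using frechet_smooth_norm_add_diff_lt[OF smooth a, of "e / 2"] e by auto
  have "norm (f - f0) \<le> e"
    if f: "f \<in> cdual" "norm f \<le> 1" "1 - \<delta> * (e / 2) < Re (blinfun_apply f a)" for f
  proof -
    have "Re (blinfun_apply (f - f0) b) \<le> e" if b: "norm b = 1" for b
    proof -
      have "Re (blinfun_apply f (a + \<delta> *\<^sub>R b)) \<le> norm (a + \<delta> *\<^sub>R b)" by (rule Re_apply_le_norm[OF f(2)])
      moreover have "Re (blinfun_apply f0 (a - \<delta> *\<^sub>R b)) \<le> norm (a - \<delta> *\<^sub>R b)" by (rule Re_apply_le_norm[OF f0(2)])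
      ultimately have "\<delta> * Re (blinfun_apply (f - f0) b) < \<delta> * e"
        using sum_lt[OF b] f(3) f0(3)
        by (simp add: blinfun.add_right blinfun.diff_right blinfun.scaleR_right blinfun.diff_left algebra_simps)
      then show ?thesis using \<delta> by simp
    qed
    then have "\<And>b. cmod (blinfun_apply (f - f0) b) \<le> e * norm b"
      using cmod_apply_le_of_Re_le[OF _ cdual_diff[OF f(1) f0(1)]]
      unfolding csubspace_in_def by blast
    then show ?thesis using e by (intro norm_blinfun_bound) auto
  qed
  then show ?thesis using \<delta> e by (intro exI[of _ "\<delta> * (e / 2)"]) auto
qed

lemma reflexive_space_norm_attained:
  assumes refl: "reflexive_space TYPE('a::cnormed_vector)"
    and f0: "f0 \<in> cdual" "norm f0 = 1"
  shows "\<exists>a::'a. norm a = 1 \<and> blinfun_apply f0 a = 1"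
proof -
  obtain \<Phi> where \<Phi>: "clinear_on cscale cdual \<Phi>" "\<forall>f\<in>cdual. cmod (\<Phi> f) \<le> norm f" "\<Phi> f0 = 1"
    using complex_structure.norming_functional[OF complex_structure_cdual f0(1)] f0(2) by auto
  then obtain a :: 'a where a: "\<forall>f\<in>cdual. \<Phi> f = blinfun_apply f a"
    using refl unfolding reflexive_space_def clinear_on_def by (metis mult_1)
  obtain g where g: "g \<in> cdual" "norm g \<le> 1" "blinfun_apply g a = of_real (norm a)"
    using exists_norming_functional by blast
  have "norm a \<le> 1" using a \<Phi>(2) g by (metis norm_of_real abs_norm_cancel order_trans)
  moreover have "1 \<le> norm a"
    using norm_blinfun[of f0 a] a \<Phi>(3) f0 by simp
  ultimately show ?thesis using a \<Phi>(3) f0(1) by auto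
qed

text \<open>Normalise psi0 and let a be a unit vector at which it attains its norm (reflexivity); then
  a has distance at least one to V0. If its distance to V is almost as large, the functional
  realising that distance in the annihilator of V almost norms a, so it is close to the
  normalised psi0 by Smulian's lemma.\<close>

lemma frechet_smooth_close_functional:
  fixes V0 :: "'a::cnormed_vector set"
  assumes refl: "reflexive_space TYPE('a)" and smooth: "frechet_smooth TYPE('a)"
    and \<rho>: "0 < \<rho>" and V0: "csubspace_in scaleC UNIV V0" and \<psi>0: "\<psi>0 \<in> annih V0"
  shows "\<exists>a \<theta>. 0 < \<theta> \<and> (\<forall>V. csubspace_in scaleC UNIV V \<longrightarrow>
    infdist a V0 - \<theta> < infdist a V \<longrightarrow> (\<exists>g\<in>annih V. dist g \<psi>0 < \<rho>))"
proof (cases "\<psi>0 = 0")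
  case True
  then show ?thesis using zero_in_annih \<rho> by (intro exI[of _ 0] exI[of _ 1]) force
next
  case False
  define n where "n = norm \<psi>0"
  have n: "0 < n" using False n_def by simp
  define f0 where "f0 = (1 / n) *\<^sub>R \<psi>0"
  have f0: "f0 \<in> annih V0" "norm f0 = 1" "\<psi>0 = n *\<^sub>R f0"
    using \<psi>0 annih_scaleR n unfolding f0_def n_def by auto
  then have f0_cdual: "f0 \<in> cdual" using annih_subset_cdual by blast
  obtain a where a: "norm a = 1" "blinfun_apply f0 a = 1"
    using reflexive_space_norm_attained[OF refl f0_cdual f0(2)] by blast
  obtain \<theta> where \<theta>: "0 < \<theta>"
    and smulian: "\<And>f. f \<in> cdual \<Longrightarrow> norm f \<le> 1 \<Longrightarrow> 1 - \<theta> < Re (blinfun_apply f a) \<Longrightarrow>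
      norm (f - f0) \<le> \<rho> / (2 * n)"
    using smulian_frechet_smooth[OF smooth a(1) f0_cdual _ a(2), of "\<rho> / (2 * n)"] f0(2) \<rho> n by auto
  have "V0 \<noteq> {}" using V0 unfolding csubspace_in_def by blast
  then have a_V0: "1 \<le> infdist a V0"
    using cmod_apply_le_norm_mult_infdist[OF f0(1), of a] a(2) f0(2) by simp
  have "\<exists>g\<in>annih V. dist g \<psi>0 < \<rho>"
    if V: "csubspace_in scaleC UNIV V" and close: "infdist a V0 - \<theta> < infdist a V" for V
  proof -
    obtain g where g: "g \<in> annih V" "norm g \<le> 1" "blinfun_apply g a = of_real (infdist a V)"
      using exists_annih_apply_eq_infdist[OF V] by blast
    have "1 - \<theta> < Re (blinfun_apply g a)" using g(3) close a_V0 by simp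
    then have g_f0: "norm (g - f0) \<le> \<rho> / (2 * n)" using smulian g(2) annih_subset_cdual g(1) by blast
    have "dist (n *\<^sub>R g) \<psi>0 = n * norm (g - f0)"
      using n unfolding f0(3) dist_norm by (simp flip: scaleR_diff_right)
    also have "\<dots> \<le> n * (\<rho> / (2 * n))" using g_f0 n by (intro mult_left_mono) auto
    finally have "dist (n *\<^sub>R g) \<psi>0 \<le> \<rho> / 2" using n by simp
    then show ?thesis using annih_scaleR[OF g(1)] \<rho> by (intro bexI[of _ "n *\<^sub>R g"]) auto
  qed
  then show ?thesis using \<theta> by blast
qed

theorem lower_vietoris_annih_of_continuous_infdist:
  fixes \<kappa> :: "'x \<Rightarrow> 'a::cnormed_vector set"
  assumes refl: "reflexive_space TYPE('a)" and smooth: "frechet_smooth TYPE('a)"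
    and sub: "\<forall>y\<in>topspace X. csubspace_in scaleC UNIV (\<kappa> y)"
    and cont: "continuous_map (prod_topology (top_of_set UNIV) X) euclideanreal (\<lambda>(a, x). infdist a (\<kappa> x))"
  shows "continuous_map X (lower_vietoris cscale cdual) (annih \<circ> \<kappa>)"
proof (rule continuous_map_lower_vietorisI)
  show "\<forall>y\<in>topspace X. csubspace_in cscale cdual ((annih \<circ> \<kappa>) y)" by (simp add: csubspace_in_annih)
next
  fix x \<psi>0 and \<rho> :: real assume x: "x \<in> topspace X" and \<psi>0: "\<psi>0 \<in> (annih \<circ> \<kappa>) x" and \<rho>: "0 < \<rho>"
  obtain a \<theta> where \<theta>: "0 < \<theta>" and close: "\<And>V. csubspace_in scaleC UNIV V \<Longrightarrow>
      infdist a (\<kappa> x) - \<theta> < infdist a V \<Longrightarrow> \<exists>g\<in>annih V. dist g \<psi>0 < \<rho>"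
    using frechet_smooth_close_functional[OF refl smooth \<rho>, of "\<kappa> x" \<psi>0] sub x \<psi>0 by auto
  obtain W where W: "openin X W" "x \<in> W" "\<forall>y\<in>W. \<bar>infdist a (\<kappa> y) - infdist a (\<kappa> x)\<bar> < \<theta>"
    using continuous_map_prod_top_of_set_slice_nbhd[OF cont UNIV_I x \<theta>] by auto
  have "\<exists>g\<in>(annih \<circ> \<kappa>) y. dist g \<psi>0 < \<rho>" if "y \<in> W" for y
    using close[of "\<kappa> y"] sub W openin_subset that by (force simp: abs_less_iff)
  with W(1,2) show "\<exists>W. openin X W \<and> x \<in> W \<and> (\<forall>y\<in>W. \<exists>q\<in>(annih \<circ> \<kappa>) y. dist q \<psi>0 < \<rho>)"
    by blast
qed

theorem theorem7p15:
  fixes X :: "'x topology" and \<kappa> :: "'x \<Rightarrow> 'a::cnormed_vector set"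
  assumes "\<forall>x\<in>topspace X. closed (\<kappa> x) \<and> csubspace_in scaleC UNIV (\<kappa> x)"
  shows "(quotient_vector_bundle X scaleC UNIV \<kappa> \<and> quotient_vector_bundle X cscale cdual (annih \<circ> \<kappa>)
            \<longrightarrow> cont_normed_qvb X scaleC UNIV \<kappa> \<and> cont_normed_qvb X cscale cdual (annih \<circ> \<kappa>))
       \<and> (locally_uniformly_convex TYPE('a) \<and> cont_normed_qvb X cscale cdual (annih \<circ> \<kappa>)
            \<longrightarrow> cont_normed_qvb X scaleC UNIV \<kappa>)
       \<and> (reflexive_space TYPE('a) \<and> frechet_smooth TYPE('a) \<and> cont_normed_qvb X scaleC UNIV \<kappa>
            \<longrightarrow> cont_normed_qvb X cscale cdual (annih \<circ> \<kappa>))"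
proof -
  have sub: "\<forall>x\<in>topspace X. csubspace_in scaleC UNIV (\<kappa> x)" using assms by blast
  note both = cont_normed_qvb_of_quotient_vector_bundles[OF sub]
  have qvb: "quotient_vector_bundle X scaleC UNIV \<kappa> \<longleftrightarrow> continuous_map X (lower_vietoris scaleC UNIV) \<kappa>"
    using sub unfolding quotient_vector_bundle_def by blast
  have qvb_annih: "quotient_vector_bundle X cscale cdual (annih \<circ> \<kappa>)
      \<longleftrightarrow> continuous_map X (lower_vietoris cscale cdual) (annih \<circ> \<kappa>)"
    unfolding quotient_vector_bundle_def by (simp add: csubspace_in_annih)
  show ?thesis
  proof (intro conjI impI)
    assume "locally_uniformly_convex TYPE('a) \<and> cont_normed_qvb X cscale cdual (annih \<circ> \<kappa>)"
    with lower_vietoris_of_continuous_infdist_annih[OF _ sub] show "cont_normed_qvb X scaleC UNIV \<kappa>"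
      using both qvb unfolding cont_normed_qvb_def by blast
  next
    assume "reflexive_space TYPE('a) \<and> frechet_smooth TYPE('a) \<and> cont_normed_qvb X scaleC UNIV \<kappa>"
    with lower_vietoris_annih_of_continuous_infdist[OF _ _ sub]
    show "cont_normed_qvb X cscale cdual (annih \<circ> \<kappa>)"
      using both qvb_annih unfolding cont_normed_qvb_def by blast
  qed (use both in blast)+
qed

end
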